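(* Let $(\mathcal L(s),\mathcal P(s))$ be a solution of the $N$-dcmKP hierarchy, with $\mathcal L=k+u_1(s,t)+u_2(s,t)k^{-1}+\cdots$ and $\mathcal P=p_0(s,t)k^N+\cdots$. Then $$\mathcal L^{\mathrm{dmKP}}(k;s,t):=\mathcal L(k-u_1(s,t);s,t),\qquad \mathcal P^{\mathrm{dmKP}}(k;s,t):=p_0(s,t)^{-1}\mathcal P(k-u_1(s,t);s,t)$$ is a solution of the dmKP hierarchy.
   Context: Fix a positive integer $N$. Variables $s$ (continuous), $x$, $t=(t_1,t_2,\dots)$; Poisson bracket $\{f,g\}=\frac{\partial f}{\partial k}\frac{\partial g}{\partial x}-\frac{\partial f}{\partial x}\frac{\partial g}{\partial k}$. For a series, $(\cdot)_{>0}$, $(\cdot)_{\ge0}$ denote projections onto powers $k^n$ with $n>0$, resp. $n\ge0$. For a series $\mathcal P=p_0k^N+\sum_{n\ge1}p_nk^{N-n}$, $\log\mathcal P:=\log p_0+N\log k+\log(1+\sum_{n\ge1}(p_n/p_0)k^{-n})$ expanded in $k^{-1}$. The $N$-dcmKP hierarchy: $\mathcal L=k+\sum_{n\ge1}u_n(s,t)k^{1-n}$, $\mathcal P=\sum_{n=0}^{N-1}p_n(s,t)k^{N-n}$ with $p_0\ne0$, satisfying $\partial_{t_n}\mathcal L=\{\mathcal B_n,\mathcal L\}$ with $\mathcal B_n:=(\mathcal L^n)_{>0}$, $\partial_s\mathcal L=\{\log\mathcal P,\mathcal L\}$, $\partial_{t_n}\log\mathcal P=\partial_s\mathcal B_n-\{\log\mathcal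 P,\mathcal B_n\}$ ($n\ge1$). The dmKP hierarchy: $\mathcal L^{\mathrm{dmKP}}=k+u^{\mathrm{dmKP}}_2k^{-1}+u^{\mathrm{dmKP}}_3k^{-2}+\cdots$ (no $k^0$ term) and $\mathcal P^{\mathrm{dmKP}}=k^N+q_1k^{N-1}+\cdots+q_N$, satisfying the same three equations with $\mathcal B_n$ replaced by $\mathcal B^{\mathrm{dmKP}}_n:=((\mathcal L^{\mathrm{dmKP}})^n)_{\ge0}$. *)

theory Defs
  imports "HOL-Analysis.Analysis"
begin

text \<open>
  Coefficient functions depend on the continuous variable s, the variable x, and the
  times t = (t_1, t_2, ...), represented as t :: nat => real with t_n = t n for n >= 1
  (the entry t 0 is an inert extra parameter).  A series in k with finitely many
  positive powers is represented by its coefficient map: (a n) is the coefficient of k^n.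
\<close>

type_synonym cf = "real \<Rightarrow> real \<Rightarrow> (nat \<Rightarrow> real) \<Rightarrow> real"
type_synonym ser = "int \<Rightarrow> cf"

definition cf0 :: cf where "cf0 = (\<lambda>s x t. 0)"

definition pd_s :: "cf \<Rightarrow> cf" where
  "pd_s f = (\<lambda>s x t. deriv (\<lambda>\<sigma>. f \<sigma> x t) s)"

definition pd_x :: "cf \<Rightarrow> cf" where
  "pd_x f = (\<lambda>s x t. deriv (\<lambda>y. f s y t) x)"

definition pd_t :: "nat \<Rightarrow> cf \<Rightarrow> cf" where
  "pd_t n f = (\<lambda>s x t. deriv (\<lambda>\<tau>. f s x (t(n := \<tau>))) (t n))"

definition cf_diff :: "cf \<Rightarrow> bool" where
  "cf_diff f \<longleftrightarrow> (\<forall>s x t.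
      (\<lambda>\<sigma>. f \<sigma> x t) differentiable (at s) \<and>
      (\<lambda>y. f s y t) differentiable (at x) \<and>
      (\<forall>n\<ge>1. (\<lambda>\<tau>. f s x (t(n := \<tau>))) differentiable (at (t n))))"

definition ser_one :: ser where
  "ser_one = (\<lambda>n s x t. if n = 0 then 1 else 0)"

definition ser_diff :: "ser \<Rightarrow> ser \<Rightarrow> ser" where
  "ser_diff a b = (\<lambda>n s x t. a n s x t - b n s x t)"

text \<open>Product (the sum is finite for series with finitely many positive powers).\<close>
definition ser_mult :: "ser \<Rightarrow> ser \<Rightarrow> ser" where
  "ser_mult a b = (\<lambda>n s x t.
     \<Sum>i\<in>{i. a i s x t \<noteq> 0 \<and> b (n - i) s x t \<noteq> 0}. a i s x t * b (n - i) s x t)"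

fun ser_pow :: "ser \<Rightarrow> nat \<Rightarrow> ser" where
  "ser_pow a 0 = ser_one"
| "ser_pow a (Suc n) = ser_mult a (ser_pow a n)"

definition proj_pos :: "ser \<Rightarrow> ser" where
  "proj_pos a = (\<lambda>n. if n > 0 then a n else cf0)"

definition proj_nonneg :: "ser \<Rightarrow> ser" where
  "proj_nonneg a = (\<lambda>n. if n \<ge> 0 then a n else cf0)"

definition ser_dk :: "ser \<Rightarrow> ser" where
  "ser_dk a = (\<lambda>n s x t. of_int (n + 1) * a (n + 1) s x t)"

definition ser_dx :: "ser \<Rightarrow> ser" where "ser_dx a = (\<lambda>n. pd_x (a n))"
definition ser_ds :: "ser \<Rightarrow> ser" where "ser_ds a = (\<lambda>n. pd_s (a n))"
definition ser_dt :: "nat \<Rightarrow> ser \<Rightarrow> ser" where "ser_dt m a = (\<lambda>n. pd_t m (a n))"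

definition pb :: "ser \<Rightarrow> ser \<Rightarrow> ser" where
  "pb f g = ser_diff (ser_mult (ser_dk f) (ser_dx g)) (ser_mult (ser_dx f) (ser_dk g))"

text \<open>Substitution k \<mapsto> k - a, expanded in powers of k^{-1}:
  (k - a)^n = \<Sum>_{i\<ge>0} (n gchoose i) (-a)^i k^{n-i} for every integer n.\<close>
definition ser_shift :: "ser \<Rightarrow> cf \<Rightarrow> ser" where
  "ser_shift c a = (\<lambda>m s x t.
     \<Sum>n\<in>{n. m \<le> n \<and> c n s x t \<noteq> 0}.
        c n s x t * ((of_int n :: real) gchoose nat (n - m)) * (- a s x t) ^ nat (n - m))"

text \<open>For P = p_0 k^N + (lower powers), log P = log p_0 + N log k + log(1 + Q) with
  Q = \<Sum>_{m\<ge>1} (p_m/p_0) k^{-m}.  We represent log P by the series part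
  logP_ser N P = log p_0 + log(1+Q) (expanded in k^{-1}); the N log k term only enters
  through d/dk (giving N k^{-1}), see dk_logP.  Since log p_0 only enters through
  derivatives, log p_0 is taken as ln |p_0| (its derivatives are p_0'/p_0).\<close>

definition logQ :: "nat \<Rightarrow> ser \<Rightarrow> ser" where
  "logQ N P = (\<lambda>j s x t. if j < 0 then P (int N + j) s x t / P (int N) s x t else 0)"

definition logP_ser :: "nat \<Rightarrow> ser \<Rightarrow> ser" where
  "logP_ser N P = (\<lambda>n s x t.
     if n = 0 then ln \<bar>P (int N) s x t\<bar>
     else if n < 0 then
       (\<Sum>j\<in>{1..nat (- n)}. (-1) ^ (j + 1) / real j * ser_pow (logQ N P) j n s x t)
     else 0)"

definition dk_logP :: "nat \<Rightarrow> ser \<Rightarrow> ser" where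
  "dk_logP N P = (\<lambda>n s x t. (if n = -1 then real N else 0) + ser_dk (logP_ser N P) n s x t)"

definition pb_log :: "nat \<Rightarrow> ser \<Rightarrow> ser \<Rightarrow> ser" where
  "pb_log N P g = ser_diff (ser_mult (dk_logP N P) (ser_dx g))
                           (ser_mult (ser_dx (logP_ser N P)) (ser_dk g))"

definition hier_eqs :: "(nat \<Rightarrow> ser) \<Rightarrow> nat \<Rightarrow> ser \<Rightarrow> ser \<Rightarrow> bool" where
  "hier_eqs B N L P \<longleftrightarrow>
     (\<forall>n\<ge>1. ser_dt n L = pb (B n) L) \<and>
     ser_ds L = pb_log N P L \<and>
     (\<forall>n\<ge>1. ser_dt n (logP_ser N P) = ser_diff (ser_ds (B n)) (pb_log N P (B n)))"

definition dcmKP :: "nat \<Rightarrow> ser \<Rightarrow> ser \<Rightarrow> bool" where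
  "dcmKP N L P \<longleftrightarrow>
     0 < N \<and>
     (\<forall>s x t. L 1 s x t = 1) \<and> (\<forall>n>1. L n = cf0) \<and>
     (\<forall>n. (n < 1 \<or> n > int N) \<longrightarrow> P n = cf0) \<and>
     (\<forall>s x t. P (int N) s x t \<noteq> 0) \<and>
     (\<forall>n. cf_diff (L n)) \<and> (\<forall>n. cf_diff (P n)) \<and>
     hier_eqs (\<lambda>n. proj_pos (ser_pow L n)) N L P"

definition dmKP :: "nat \<Rightarrow> ser \<Rightarrow> ser \<Rightarrow> bool" where
  "dmKP N L P \<longleftrightarrow>
     (\<forall>s x t. L 1 s x t = 1) \<and> L 0 = cf0 \<and> (\<forall>n>1. L n = cf0) \<and>
     (\<forall>s x t. P (int N) s x t = 1) \<and>
     (\<forall>n. (n < 0 \<or> n > int N) \<longrightarrow> P n = cf0) \<and>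
     (\<forall>n. cf_diff (L n)) \<and> (\<forall>n. cf_diff (P n)) \<and>
     hier_eqs (\<lambda>n. proj_nonneg (ser_pow L n)) N L P"

end

(*
  A series with finitely many positive powers of k is a formal Laurent series in k\<^sup>-\<^sup>1, so every
  algebraic identity between such series can be checked in the ring of Laurent series.  The
  substitution k \<mapsto> k - u is a ring homomorphism commuting with \<partial>\<^sub>k (Vandermonde), and for each
  of the coordinate derivatives \<partial> = \<partial>\<^sub>s, \<partial>\<^sub>x, \<partial>\<^sub>t\<^sub>n it obeys the chain rule
  \<partial>(a(k - u)) = (\<partial>a)(k - u) - \<partial>u \<cdot> \<partial>\<^sub>k(a(k - u)).

  For a dcmKP solution put L' = L(k - u\<^sub>1) and P' = P(k - u\<^sub>1)/p\<^sub>0.  Then (L'\<^sup>n)\<^sub>\<ge>\<^sub>0 = B\<^sub>n(k - u\<^sub>1) + c\<^sub>n,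
  where c\<^sub>n is the k\<^sup>0 coefficient of L\<^sup>n, and by the chain rule
  \<partial> log P' = (\<partial> log P)(k - u\<^sub>1) - \<partial>u\<^sub>1 \<cdot> (\<partial>\<^sub>k log P)(k - u\<^sub>1) - \<partial>p\<^sub>0 / p\<^sub>0.
  The k\<^sup>0 coefficients of the dcmKP equations give
  \<partial>\<^sub>t\<^sub>n u\<^sub>1 = \<partial>\<^sub>x c\<^sub>n,  \<partial>\<^sub>s u\<^sub>1 = -\<partial>\<^sub>x p\<^sub>0 / p\<^sub>0  and  \<partial>\<^sub>s c\<^sub>n = -\<partial>\<^sub>t\<^sub>n p\<^sub>0 / p\<^sub>0,
  and these are exactly the identities needed to cancel the extra terms produced by the chain rule
  in the dmKP equations for (L', P').
*)
theory Submission
  imports Defs "HOL-Computational_Algebra.Formal_Laurent_Series"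
begin

unbundle fps_syntax

section \<open>Series as formal Laurent series\<close>

lemma fls_times_nth_bounds:
  fixes f g :: "'a :: semiring_0 fls"
  assumes "\<And>i. i < lf \<Longrightarrow> f $$ i = 0" "\<And>i. i < lg \<Longrightarrow> g $$ i = 0"
  shows "(f * g) $$ n = (\<Sum>i\<in>{lf..n-lg}. f $$ i * g $$ (n - i))"
proof (cases "f = 0 \<or> g = 0")
  case True thus ?thesis by auto
next
  case False
  hence f0: "f \<noteq> 0" and g0: "g \<noteq> 0" by auto
  have lf: "lf \<le> fls_subdegree f" by (rule fls_subdegree_geI[OF f0 assms(1)])
  have lg: "lg \<le> fls_subdegree g" by (rule fls_subdegree_geI[OF g0 assms(2)])
  have "(f * g) $$ n = (\<Sum>i\<in>{fls_subdegree f..n - fls_subdegree g}. f $$ i * g $$ (n - i))"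
    by (rule fls_times_nth(2))
  also have "\<dots> = (\<Sum>i\<in>{lf..n-lg}. f $$ i * g $$ (n - i))"
  proof (rule sum.mono_neutral_left)
    show "finite {lf..n - lg}" by simp
    show "{fls_subdegree f..n - fls_subdegree g} \<subseteq> {lf..n - lg}" using lf lg by auto
    show "\<forall>i\<in>{lf..n - lg} - {fls_subdegree f..n - fls_subdegree g}. f $$ i * g $$ (n - i) = 0"
      by auto
  qed
  finally show ?thesis .
qed

lemma sum_int_interval_reflect: "(\<Sum>i\<in>{a..b::int}. f i) = (\<Sum>i\<in>{-b..-a}. f (-i))"
  by (rule sum.reindex_bij_witness[of _ uminus uminus]) auto

definition ser_deg_le :: "ser \<Rightarrow> int \<Rightarrow> bool" where
  "ser_deg_le a d \<longleftrightarrow> (\<forall>n>d. \<forall>s x t. a n s x t = 0)"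
definition ser_bounded :: "ser \<Rightarrow> bool" where "ser_bounded a \<longleftrightarrow> (\<exists>d. ser_deg_le a d)"

text \<open>The coefficient of \<open>k\<^sup>n\<close> becomes the coefficient of \<open>X\<^sup>-\<^sup>n\<close>, i.e. \<open>X\<close> stands for \<open>k\<^sup>-\<^sup>1\<close>.\<close>
definition ser_fls :: "ser \<Rightarrow> real \<Rightarrow> real \<Rightarrow> (nat \<Rightarrow> real) \<Rightarrow> real fls" where
  "ser_fls a s x t = Abs_fls (\<lambda>n. a (-n) s x t)"

lemma ser_deg_leD: "ser_deg_le a d \<Longrightarrow> d < n \<Longrightarrow> a n s x t = 0" by (auto simp: ser_deg_le_def)
lemma ser_deg_le_mono: "ser_deg_le a d \<Longrightarrow> d \<le> e \<Longrightarrow> ser_deg_le a e" by (auto simp: ser_deg_le_def)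
lemma ser_boundedI: "ser_deg_le a d \<Longrightarrow> ser_bounded a" by (auto simp: ser_bounded_def)

lemma ser_fls_nth_deg_le: "ser_deg_le a d \<Longrightarrow> ser_fls a s x t $$ n = a (-n) s x t"
  unfolding ser_fls_def by (rule nth_Abs_fls_lower_bound[where N="-d"]) (auto simp: ser_deg_le_def)
lemma ser_fls_nth: "ser_bounded a \<Longrightarrow> ser_fls a s x t $$ n = a (-n) s x t"
  by (auto simp: ser_bounded_def intro: ser_fls_nth_deg_le)

lemma ser_eqI:
  assumes "ser_bounded a" "ser_bounded b" "\<And>s x t. ser_fls a s x t = ser_fls b s x t"
  shows "a = b"
proof (intro ext)
  fix n s x t
  have "ser_fls a s x t $$ (-n) = ser_fls b s x t $$ (-n)" using assms(3) by simp
  thus "a n s x t = b n s x t" using ser_fls_nth[OF assms(1)] ser_fls_nth[OF assms(2)] by simp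
qed

definition ser_add :: "ser \<Rightarrow> ser \<Rightarrow> ser" where "ser_add a b = (\<lambda>n s x t. a n s x t + b n s x t)"
definition ser_smul :: "cf \<Rightarrow> ser \<Rightarrow> ser" where "ser_smul c a = (\<lambda>n s x t. c s x t * a n s x t)"
definition ser_const :: "cf \<Rightarrow> ser" where "ser_const c = (\<lambda>n s x t. if n = 0 then c s x t else 0)"
definition ser_monom :: "int \<Rightarrow> ser" where "ser_monom N = (\<lambda>n s x t. if n = N then 1 else 0)"

lemma ser_deg_le_add: "ser_deg_le a d \<Longrightarrow> ser_deg_le b e \<Longrightarrow> ser_deg_le (ser_add a b) (max d e)"
  by (auto simp: ser_deg_le_def ser_add_def)
lemma ser_deg_le_diff: "ser_deg_le a d \<Longrightarrow> ser_deg_le b e \<Longrightarrow> ser_deg_le (ser_diff a b) (max d e)"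
  by (auto simp: ser_deg_le_def ser_diff_def)
lemma ser_deg_le_smul: "ser_deg_le a d \<Longrightarrow> ser_deg_le (ser_smul c a) d"
  by (auto simp: ser_deg_le_def ser_smul_def)
lemma ser_deg_le_const: "ser_deg_le (ser_const c) 0" by (auto simp: ser_deg_le_def ser_const_def)
lemma ser_deg_le_one: "ser_deg_le ser_one 0" by (auto simp: ser_deg_le_def ser_one_def)
lemma ser_deg_le_monom: "ser_deg_le (ser_monom N) N" by (auto simp: ser_deg_le_def ser_monom_def)
lemma ser_deg_le_dk: "ser_deg_le a d \<Longrightarrow> ser_deg_le (ser_dk a) (d - 1)"
  by (auto simp: ser_deg_le_def ser_dk_def)

lemma ser_bounded_add [simp]: "ser_bounded a \<Longrightarrow> ser_bounded b \<Longrightarrow> ser_bounded (ser_add a b)"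
  by (meson ser_boundedI ser_bounded_def ser_deg_le_add)
lemma ser_bounded_diff [simp]: "ser_bounded a \<Longrightarrow> ser_bounded b \<Longrightarrow> ser_bounded (ser_diff a b)"
  by (meson ser_boundedI ser_bounded_def ser_deg_le_diff)
lemma ser_bounded_smul [simp]: "ser_bounded a \<Longrightarrow> ser_bounded (ser_smul c a)"
  by (meson ser_boundedI ser_bounded_def ser_deg_le_smul)
lemma ser_bounded_const [simp]: "ser_bounded (ser_const c)" by (meson ser_boundedI ser_deg_le_const)
lemma ser_bounded_one [simp]: "ser_bounded ser_one" by (meson ser_boundedI ser_deg_le_one)
lemma ser_bounded_monom [simp]: "ser_bounded (ser_monom N)" by (meson ser_boundedI ser_deg_le_monom)
lemma ser_bounded_dk [simp]: "ser_bounded a \<Longrightarrow> ser_bounded (ser_dk a)"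
  by (meson ser_boundedI ser_bounded_def ser_deg_le_dk)

lemma ser_fls_add [simp]:
  assumes "ser_bounded a" "ser_bounded b"
  shows "ser_fls (ser_add a b) s x t = ser_fls a s x t + ser_fls b s x t"
  by (rule fls_eqI) (simp only: fls_plus_nth ser_fls_nth[OF ser_bounded_add[OF assms]]
      ser_fls_nth[OF assms(1)] ser_fls_nth[OF assms(2)], simp add: ser_add_def)
lemma ser_fls_diff [simp]:
  assumes "ser_bounded a" "ser_bounded b"
  shows "ser_fls (ser_diff a b) s x t = ser_fls a s x t - ser_fls b s x t"
  by (rule fls_eqI) (simp only: fls_minus_nth ser_fls_nth[OF ser_bounded_diff[OF assms]]
      ser_fls_nth[OF assms(1)] ser_fls_nth[OF assms(2)], simp add: ser_diff_def)
lemma ser_fls_smul [simp]: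
  assumes "ser_bounded a"
  shows "ser_fls (ser_smul c a) s x t = fls_const (c s x t) * ser_fls a s x t"
  by (rule fls_eqI) (simp only: fls_mult_const_nth ser_fls_nth[OF ser_bounded_smul[OF assms]]
      ser_fls_nth[OF assms(1)], simp add: ser_smul_def)
lemma ser_fls_const [simp]: "ser_fls (ser_const c) s x t = fls_const (c s x t)"
  by (rule fls_eqI) (simp only: ser_fls_nth[OF ser_bounded_const], simp add: ser_const_def)
lemma ser_fls_one [simp]: "ser_fls ser_one s x t = 1"
  by (rule fls_eqI) (simp only: ser_fls_nth[OF ser_bounded_one], simp add: ser_one_def)
lemma ser_fls_monom: "ser_fls (ser_monom N) s x t = fls_shift N 1"
  by (rule fls_eqI) (simp only: ser_fls_nth[OF ser_bounded_monom], simp add: ser_monom_def)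
lemma ser_fls_dk [simp]:
  "ser_bounded a \<Longrightarrow> ser_fls (ser_dk a) s x t = - (fls_X ^ 2 * fls_deriv (ser_fls a s x t))"
  by (rule fls_eqI) (simp only: ser_fls_nth[OF ser_bounded_dk] fls_uminus_nth,
      simp add: ser_fls_nth ser_dk_def fls_X_power_times_conv_shift, simp add: algebra_simps)

lemma ser_mult_eq_sum:
  assumes "ser_deg_le a d" "ser_deg_le b e"
  shows "ser_mult a b n s x t = (\<Sum>i\<in>{n-e..d}. a i s x t * b (n-i) s x t)"
  unfolding ser_mult_def
proof (rule sum.mono_neutral_left)
  show "finite {n - e..d}" by simp
  show "{i. a i s x t \<noteq> 0 \<and> b (n - i) s x t \<noteq> 0} \<subseteq> {n - e..d}"
  proof
    fix i assume "i \<in> {i. a i s x t \<noteq> 0 \<and> b (n - i) s x t \<noteq> 0}"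
    hence "\<not> d < i" "\<not> e < n - i" using assms by (auto simp: ser_deg_le_def)
    thus "i \<in> {n - e..d}" by auto
  qed
  show "\<forall>i\<in>{n - e..d} - {i. a i s x t \<noteq> 0 \<and> b (n - i) s x t \<noteq> 0}. a i s x t * b (n - i) s x t = 0"
    by auto
qed

lemma ser_deg_le_mult: "ser_deg_le a d \<Longrightarrow> ser_deg_le b e \<Longrightarrow> ser_deg_le (ser_mult a b) (d + e)"
  unfolding ser_deg_le_def[of "ser_mult a b"] by (auto simp: ser_mult_eq_sum)

lemma ser_bounded_mult [simp]: "ser_bounded a \<Longrightarrow> ser_bounded b \<Longrightarrow> ser_bounded (ser_mult a b)"
  by (meson ser_boundedI ser_bounded_def ser_deg_le_mult)

lemma ser_fls_mult [simp]:
  assumes "ser_bounded a" "ser_bounded b"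
  shows "ser_fls (ser_mult a b) s x t = ser_fls a s x t * ser_fls b s x t"
proof -
  obtain d e where d: "ser_deg_le a d" and e: "ser_deg_le b e" using assms
    by (auto simp: ser_bounded_def)
  show ?thesis
  proof (rule fls_eqI)
    fix n
    have "(ser_fls a s x t * ser_fls b s x t) $$ n
        = (\<Sum>i\<in>{-d..n-(-e)}. ser_fls a s x t $$ i * ser_fls b s x t $$ (n - i))"
      by (rule fls_times_nth_bounds) (auto simp: ser_fls_nth_deg_le[OF d] ser_fls_nth_deg_le[OF e]
          ser_deg_le_def intro!: ser_deg_leD[OF d] ser_deg_leD[OF e])
    also have "\<dots> = (\<Sum>i\<in>{-d..n+e}. a (-i) s x t * b (i - n) s x t)"
      by (simp add: ser_fls_nth_deg_le[OF d] ser_fls_nth_deg_le[OF e])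
    also have "\<dots> = (\<Sum>i\<in>{-n-e..d}. a i s x t * b (-n - i) s x t)"
      by (subst sum_int_interval_reflect) (simp add: algebra_simps)
    also have "\<dots> = ser_mult a b (-n) s x t" by (simp add: ser_mult_eq_sum[OF d e])
    finally show "ser_fls (ser_mult a b) s x t $$ n = (ser_fls a s x t * ser_fls b s x t) $$ n"
      using ser_fls_nth[OF ser_bounded_mult[OF assms]] by simp
  qed
qed

lemma ser_deg_le_pow: "ser_deg_le a d \<Longrightarrow> ser_deg_le (ser_pow a n) (int n * d)"
proof (induction n)
  case 0 thus ?case using ser_deg_le_one by simp
next
  case (Suc n)
  have "ser_deg_le (ser_mult a (ser_pow a n)) (d + int n * d)"
    by (rule ser_deg_le_mult[OF Suc.prems Suc.IH[OF Suc.prems]])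
  thus ?case by (simp add: algebra_simps)
qed

lemma ser_bounded_pow [simp]: "ser_bounded a \<Longrightarrow> ser_bounded (ser_pow a n)"
  by (meson ser_boundedI ser_bounded_def ser_deg_le_pow)

lemma ser_fls_pow [simp]: "ser_bounded a \<Longrightarrow> ser_fls (ser_pow a n) s x t = ser_fls a s x t ^ n"
  by (induction n) auto

lemma ser_mult_monom: "ser_mult (ser_monom a) (ser_monom b) = ser_monom (a + b)"
  by (rule ser_eqI) (auto simp: ser_fls_monom fls_shifted_times_simps)

lemma ser_mult_left_cancel:
  assumes Y: "ser_deg_le Y M" "\<And>s x t. Y M s x t \<noteq> 0" and A: "ser_bounded A" "ser_bounded B"
    and eq: "ser_mult Y A = ser_mult Y B"
  shows "A = B"
proof (rule ser_eqI[OF A])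
  fix s x t
  have "ser_fls Y s x t * ser_fls A s x t = ser_fls Y s x t * ser_fls B s x t"
    using arg_cong[OF eq, of "\<lambda>a. ser_fls a s x t"] ser_boundedI[OF Y(1)] A by simp
  moreover have "ser_fls Y s x t \<noteq> 0"
  proof
    assume "ser_fls Y s x t = 0"
    hence "ser_fls Y s x t $$ (- M) = 0" by simp
    thus False using ser_fls_nth_deg_le[OF Y(1)] Y(2)[of s x t] by simp
  qed
  ultimately show "ser_fls A s x t = ser_fls B s x t" by simp
qed

lemma ser_mult_smul_left:
  "ser_bounded a \<Longrightarrow> ser_bounded b \<Longrightarrow> ser_mult (ser_smul c a) b = ser_smul c (ser_mult a b)"
  by (rule ser_eqI) (simp_all add: mult.assoc)

section \<open>The substitution \<open>k \<mapsto> k - u\<close>\<close>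

text \<open>The coefficient of \<open>k\<^sup>n\<^sup>-\<^sup>q\<close> in \<open>(k + w)\<^sup>n\<close>, for every integer \<open>n\<close>.\<close>
definition shift_coeff :: "real \<Rightarrow> int \<Rightarrow> int \<Rightarrow> real" where
  "shift_coeff w n q = (of_int n gchoose nat q) * w ^ nat q"

lemma ser_shift_eq_sum:
  assumes "ser_deg_le c d"
  shows "ser_shift c u m s x t = (\<Sum>n\<in>{m..d}. c n s x t * shift_coeff (- u s x t) n (n - m))"
  unfolding ser_shift_def shift_coeff_def mult.assoc
proof (rule sum.mono_neutral_left)
  show "finite {m..d}" by simp
  show "{n. m \<le> n \<and> c n s x t \<noteq> 0} \<subseteq> {m..d}"
  proof
    fix n assume "n \<in> {n. m \<le> n \<and> c n s x t \<noteq> 0}"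
    hence "m \<le> n" "\<not> d < n" using assms by (auto simp: ser_deg_le_def)
    thus "n \<in> {m..d}" by auto
  qed
  show "\<forall>i\<in>{m..d} - {n. m \<le> n \<and> c n s x t \<noteq> 0}.
       c i s x t * ((of_int i gchoose nat (i - m)) * (- u s x t) ^ nat (i - m)) = 0" by auto
qed

lemma ser_deg_le_shift: "ser_deg_le c d \<Longrightarrow> ser_deg_le (ser_shift c u) d"
  unfolding ser_deg_le_def[of "ser_shift c u"] by (auto simp: ser_shift_eq_sum)

lemma ser_bounded_shift [simp]: "ser_bounded c \<Longrightarrow> ser_bounded (ser_shift c u)"
  by (meson ser_boundedI ser_bounded_def ser_deg_le_shift)

lemma gbinomial_of_int_eq_0: "0 \<le> n \<Longrightarrow> n < int k \<Longrightarrow> (of_int n gchoose k :: real) = 0"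
proof -
  assume a: "0 \<le> n" "n < int k"
  have "(of_int n gchoose k :: real) = of_nat (nat n) gchoose k" using a(1) by simp
  also have "\<dots> = of_nat (nat n choose k)" by (rule binomial_gbinomial[symmetric])
  also have "nat n choose k = 0" using a by (intro binomial_eq_0) linarith
  finally show ?thesis by simp
qed

lemma shift_coeff_Vandermonde:
  assumes "m \<le> i + j"
  shows "(\<Sum>p\<in>{m-j..i}. shift_coeff w i (i - p) * shift_coeff w j (j - (m - p)))
      = shift_coeff w (i + j) (i + j - m)"
proof -
  define K where "K = nat (i + j - m)"
  have "(\<Sum>p\<in>{m-j..i}. shift_coeff w i (i - p) * shift_coeff w j (j - (m - p)))
      = (\<Sum>q\<in>{0..K}. shift_coeff w i (int q) * shift_coeff w j (int (K - q)))"
  proof (rule sum.reindex_bij_witness[of _ "\<lambda>q. i - int q" "\<lambda>p. nat (i - p)"])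
    fix p assume p: "p \<in> {m-j..i}"
    show "i - int (nat (i - p)) = p" using p by auto
    show "nat (i - p) \<in> {0..K}" using p assms by (auto simp: K_def)
    have "int (K - nat (i - p)) = j - (m - p)" using p assms by (auto simp: K_def)
    thus "shift_coeff w i (int (nat (i - p))) * shift_coeff w j (int (K - nat (i - p)))
        = shift_coeff w i (i - p) * shift_coeff w j (j - (m - p))"
      using p by simp
  next
    fix q assume q: "q \<in> {0..K}"
    show "nat (i - (i - int q)) = q" by simp
    show "i - int q \<in> {m-j..i}" using q assms by (auto simp: K_def)
  qed
  also have "\<dots> = (\<Sum>q\<in>{0..K}. w ^ K * ((of_int i gchoose q) * (of_int j gchoose (K - q))))"
  proof (rule sum.cong[OF refl])
    fix q assume "q \<in> {0..K}"
    hence pw: "w ^ q * w ^ (K - q) = w ^ K" by (simp add: power_add[symmetric])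
    show "shift_coeff w i (int q) * shift_coeff w j (int (K - q))
        = w ^ K * ((of_int i gchoose q) * (of_int j gchoose (K - q)))"
      unfolding shift_coeff_def nat_int by (subst pw[symmetric]) (simp add: mult_ac)
  qed
  also have "\<dots> = w ^ K * ((of_int i + of_int j) gchoose K)"
    by (simp add: sum_distrib_left[symmetric] gbinomial_Vandermonde)
  also have "\<dots> = shift_coeff w (i + j) (i + j - m)" by (simp add: shift_coeff_def K_def)
  finally show ?thesis .
qed

lemma shift_coeff_convolution:
  fixes f g :: "int \<Rightarrow> real"
  shows "(\<Sum>n\<in>{m..d+e}. (\<Sum>i\<in>{n-e..d}. f i * g (n-i)) * shift_coeff w n (n-m)) =
         (\<Sum>p\<in>{m-e..d}. (\<Sum>i\<in>{p..d}. f i * shift_coeff w i (i-p)) *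
                         (\<Sum>j\<in>{m-p..e}. g j * shift_coeff w j (j-(m-p))))"
proof -
  define C where "C i p = shift_coeff w i (i - p)" for i p
  define T where "T = (\<Sum>i\<in>{m-e..d}. \<Sum>j\<in>{m-i..e}. f i * g j * C (i+j) m)"
  have "(\<Sum>n\<in>{m..d+e}. (\<Sum>i\<in>{n-e..d}. f i * g (n-i)) * C n m)
      = (\<Sum>n\<in>{m..d+e}. \<Sum>i\<in>{n-e..d}. f i * g (n-i) * C n m)"
    by (simp add: sum_distrib_right)
  also have "\<dots> = (\<Sum>(n,i)\<in>Sigma {m..d+e} (\<lambda>n. {n-e..d}). f i * g (n-i) * C n m)"
    by (rule sum.Sigma) auto
  also have "\<dots> = (\<Sum>(i,j)\<in>Sigma {m-e..d} (\<lambda>i. {m-i..e}). f i * g j * C (i+j) m)"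
    by (rule sum.reindex_bij_witness[of _ "\<lambda>(i,j). (i+j, i)" "\<lambda>(n,i). (i, n-i)"]) auto
  also have "\<dots> = T" unfolding T_def by (rule sum.Sigma[symmetric]) auto
  finally have lhs: "(\<Sum>n\<in>{m..d+e}. (\<Sum>i\<in>{n-e..d}. f i * g (n-i)) * C n m) = T" .
  have "(\<Sum>p\<in>{m-e..d}. (\<Sum>i\<in>{p..d}. f i * C i p) * (\<Sum>j\<in>{m-p..e}. g j * C j (m-p)))
      = (\<Sum>p\<in>{m-e..d}. \<Sum>i\<in>{p..d}. \<Sum>j\<in>{m-p..e}. f i * C i p * (g j * C j (m-p)))"
    by (simp add: sum_product)
  also have "\<dots> = (\<Sum>p\<in>{m-e..d}. \<Sum>(i,j)\<in>Sigma {p..d} (\<lambda>i. {m-p..e}). f i * C i p * (g j * C j (m-p)))"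
    by (rule sum.cong[OF refl], rule sum.Sigma) auto
  also have "\<dots> = (\<Sum>(p,ij)\<in>Sigma {m-e..d} (\<lambda>p. Sigma {p..d} (\<lambda>i. {m-p..e})).
      (\<lambda>(i,j). f i * C i p * (g j * C j (m-p))) ij)"
    by (rule sum.Sigma) auto
  also have "\<dots> = (\<Sum>(i,jp)\<in>Sigma {m-e..d} (\<lambda>i. Sigma {m-i..e} (\<lambda>j. {m-j..i})).
      (\<lambda>(j,p). f i * g j * (C i p * C j (m-p))) jp)"
    by (rule sum.reindex_bij_witness[of _ "\<lambda>(i,(j,p)). (p,(i,j))" "\<lambda>(p,(i,j)). (i,(j,p))"]) auto
  also have "\<dots> = (\<Sum>i\<in>{m-e..d}. \<Sum>(j,p)\<in>Sigma {m-i..e} (\<lambda>j. {m-j..i}). f i * g j * (C i p * C j (m-p)))"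
    by (rule sum.Sigma[symmetric]) auto
  also have "\<dots> = (\<Sum>i\<in>{m-e..d}. \<Sum>j\<in>{m-i..e}. \<Sum>p\<in>{m-j..i}. f i * g j * (C i p * C j (m-p)))"
    by (rule sum.cong[OF refl], rule sum.Sigma[symmetric]) auto
  also have "\<dots> = T" unfolding T_def
    by (intro sum.cong refl) (simp add: sum_distrib_left[symmetric] C_def shift_coeff_Vandermonde)
  finally show ?thesis using lhs unfolding C_def by simp
qed

lemma ser_shift_mult [simp]:
  assumes "ser_bounded a" "ser_bounded b"
  shows "ser_shift (ser_mult a b) u = ser_mult (ser_shift a u) (ser_shift b u)"
proof (intro ext)
  fix m s x t
  obtain d e where d: "ser_deg_le a d" and e: "ser_deg_le b e" using assms
    by (auto simp: ser_bounded_def)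
  show "ser_shift (ser_mult a b) u m s x t = ser_mult (ser_shift a u) (ser_shift b u) m s x t"
    by (simp add: ser_shift_eq_sum[OF ser_deg_le_mult[OF d e]] ser_mult_eq_sum[OF d e]
        ser_mult_eq_sum[OF ser_deg_le_shift[OF d] ser_deg_le_shift[OF e]]
        ser_shift_eq_sum[OF d] ser_shift_eq_sum[OF e]
        shift_coeff_convolution[where f="\<lambda>i. a i s x t" and g="\<lambda>i. b i s x t" and w="- u s x t"])
qed

lemma ser_shift_add [simp]:
  assumes "ser_bounded a" "ser_bounded b"
  shows "ser_shift (ser_add a b) u = ser_add (ser_shift a u) (ser_shift b u)"
proof (intro ext)
  fix m s x t
  obtain d e where d: "ser_deg_le a d" and e: "ser_deg_le b e" using assms
    by (auto simp: ser_bounded_def)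
  have d': "ser_deg_le a (max d e)" "ser_deg_le b (max d e)" using d e by (auto intro: ser_deg_le_mono)
  show "ser_shift (ser_add a b) u m s x t = ser_add (ser_shift a u) (ser_shift b u) m s x t"
    by (simp add: ser_shift_eq_sum[OF ser_deg_le_add[OF d'(1) d'(2), simplified]]
        ser_shift_eq_sum[OF d'(1)] ser_shift_eq_sum[OF d'(2)]
        ser_add_def[of "ser_shift a u"] sum.distrib[symmetric] algebra_simps)
       (simp add: ser_add_def algebra_simps)
qed

lemma ser_shift_diff [simp]:
  assumes "ser_bounded a" "ser_bounded b"
  shows "ser_shift (ser_diff a b) u = ser_diff (ser_shift a u) (ser_shift b u)"
proof (intro ext)
  fix m s x t
  obtain d e where d: "ser_deg_le a d" and e: "ser_deg_le b e" using assms
    by (auto simp: ser_bounded_def)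
  have d': "ser_deg_le a (max d e)" "ser_deg_le b (max d e)" using d e by (auto intro: ser_deg_le_mono)
  show "ser_shift (ser_diff a b) u m s x t = ser_diff (ser_shift a u) (ser_shift b u) m s x t"
    by (simp add: ser_shift_eq_sum[OF ser_deg_le_diff[OF d'(1) d'(2), simplified]]
        ser_shift_eq_sum[OF d'(1)] ser_shift_eq_sum[OF d'(2)]
        ser_diff_def[of "ser_shift a u"] sum_subtractf[symmetric] algebra_simps)
       (simp add: ser_diff_def algebra_simps)
qed

lemma ser_shift_smul [simp]:
  assumes "ser_bounded a"
  shows "ser_shift (ser_smul c a) u = ser_smul c (ser_shift a u)"
proof (intro ext)
  fix m s x t
  obtain d where d: "ser_deg_le a d" using assms by (auto simp: ser_bounded_def)
  show "ser_shift (ser_smul c a) u m s x t = ser_smul c (ser_shift a u) m s x t"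
    by (simp add: ser_shift_eq_sum[OF ser_deg_le_smul[OF d]] ser_shift_eq_sum[OF d]
        ser_smul_def[of _ "ser_shift a u"] sum_distrib_left)
       (simp add: ser_smul_def algebra_simps)
qed

lemma ser_shift_const [simp]: "ser_shift (ser_const c) u = ser_const c"
proof (intro ext)
  fix m s x t
  have "ser_shift (ser_const c) u m s x t
      = (\<Sum>n\<in>{m..0}. ser_const c n s x t * shift_coeff (- u s x t) n (n - m))"
    by (rule ser_shift_eq_sum[OF ser_deg_le_const])
  also have "\<dots> = ser_const c m s x t"
  proof (cases "m < 0")
    case True
    have "(\<Sum>n\<in>{m..0}. ser_const c n s x t * shift_coeff (- u s x t) n (n - m)) = 0"
      using True by (intro sum.neutral) (auto simp: ser_const_def shift_coeff_def gbinomial_0_left)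
    thus ?thesis using True by (simp add: ser_const_def)
  next
    case False
    thus ?thesis by (cases "m = 0") (auto simp: ser_const_def shift_coeff_def)
  qed
  finally show "ser_shift (ser_const c) u m s x t = ser_const c m s x t" .
qed

lemma ser_one_eq_const: "ser_one = ser_const (\<lambda>s x t. 1)"
  by (auto simp: ser_one_def ser_const_def)

lemma ser_shift_one [simp]: "ser_shift ser_one u = ser_one"
  by (simp add: ser_one_eq_const)

lemma ser_shift_pow [simp]: "ser_bounded a \<Longrightarrow> ser_shift (ser_pow a n) u = ser_pow (ser_shift a u) n"
  by (induction n) auto

lemma ser_shift_dk [simp]:
  assumes "ser_bounded a"
  shows "ser_shift (ser_dk a) u = ser_dk (ser_shift a u)"
proof (intro ext)
  fix m s x t
  obtain d where d: "ser_deg_le a d" using assms by (auto simp: ser_bounded_def)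
  define w where "w = - u s x t"
  have "ser_shift (ser_dk a) u m s x t
      = (\<Sum>n\<in>{m..d-1}. of_int (n+1) * a (n+1) s x t * shift_coeff w n (n - m))"
    by (subst ser_shift_eq_sum[OF ser_deg_le_dk[OF d]]) (simp add: ser_dk_def w_def)
  also have "\<dots> = (\<Sum>n\<in>{m+1..d}. of_int n * a n s x t * shift_coeff w (n - 1) (n - 1 - m))"
    by (rule sum.reindex_bij_witness[of _ "\<lambda>n. n - 1" "\<lambda>n. n + 1"]) auto
  also have "\<dots> = (\<Sum>n\<in>{m+1..d}. of_int (m + 1) * (a n s x t * shift_coeff w n (n - (m + 1))))"
  proof (rule sum.cong[OF refl])
    fix n assume n: "n \<in> {m+1..d}"
    define q where "q = nat (n - 1 - m)"
    have q1: "nat (n - (m+1)) = q" by (simp add: q_def)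
    have "(of_int n - of_nat q) * (of_int n gchoose q) = (of_int n :: real) * ((of_int n - 1) gchoose q)"
      by (rule gbinomial_absorb_comp)
    moreover have "(of_int n - of_nat q :: real) = of_int (m + 1)" using n by (simp add: q_def)
    ultimately have "of_int (m+1) * (of_int n gchoose q)
        = (of_int n :: real) * (of_int (n - 1) gchoose q)"
      by simp
    thus "of_int n * a n s x t * shift_coeff w (n - 1) (n - 1 - m)
        = of_int (m + 1) * (a n s x t * shift_coeff w n (n - (m + 1)))"
      unfolding shift_coeff_def q1 q_def[symmetric]
      by (metis (no_types, lifting) mult.assoc mult.left_commute)
  qed
  also have "\<dots> = ser_dk (ser_shift a u) m s x t"
    by (simp add: ser_dk_def ser_shift_eq_sum[OF d] w_def sum_distrib_left)
  finally show "ser_shift (ser_dk a) u m s x t = ser_dk (ser_shift a u) m s x t" .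
qed

lemma proj_nonneg_shift:
  assumes "ser_deg_le X d"
  shows "proj_nonneg (ser_shift X u) = ser_add (ser_shift (proj_pos X) u) (ser_const (X 0))"
proof (intro ext)
  fix m s x t
  define e where "e = max d 0"
  have X: "ser_deg_le X e" using assms ser_deg_le_mono e_def by auto
  have Xp: "ser_deg_le (proj_pos X) e" using X by (auto simp: ser_deg_le_def proj_pos_def cf0_def)
  define C where "C n = shift_coeff (- u s x t) n (n - m)" for n
  have split: "(\<Sum>n\<in>{m..e}. X n s x t * C n) = (\<Sum>n\<in>{m..e}. proj_pos X n s x t * C n)
      + (\<Sum>n\<in>{m..e}. (if n \<le> 0 then X n s x t else 0) * C n)"
    unfolding sum.distrib[symmetric] distrib_right[symmetric]
    by (intro sum.cong) (auto simp: proj_pos_def cf0_def)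
  show "proj_nonneg (ser_shift X u) m s x t
      = ser_add (ser_shift (proj_pos X) u) (ser_const (X 0)) m s x t"
  proof (cases "m < 0")
    case True
    have "(\<Sum>n\<in>{m..e}. proj_pos X n s x t * C n) = 0"
      using True by (intro sum.neutral)
        (auto simp: proj_pos_def cf0_def C_def shift_coeff_def intro!: gbinomial_of_int_eq_0)
    then show ?thesis
      using True by (simp add: proj_nonneg_def ser_add_def ser_const_def ser_shift_eq_sum[OF Xp] cf0_def
          flip: C_def)
  next
    case False
    have "(\<Sum>n\<in>{m..e}. (if n \<le> 0 then X n s x t else 0) * C n) = (\<Sum>n\<in>{m..0}. X n s x t * C n)"
      using False by (intro sum.mono_neutral_cong_right) (auto simp: e_def)
    also have "\<dots> = (if m = 0 then X 0 s x t else 0)"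
      using False by (cases "m = 0") (auto simp: C_def shift_coeff_def)
    finally show ?thesis
      using False by (simp add: proj_nonneg_def ser_add_def ser_const_def ser_shift_eq_sum[OF X]
          ser_shift_eq_sum[OF Xp] split flip: C_def)
  qed
qed

section \<open>Coordinate derivatives\<close>

definition cf_at :: "cf \<Rightarrow> real \<times> real \<times> (nat \<Rightarrow> real) \<Rightarrow> real" where
  "cf_at f p = f (fst p) (fst (snd p)) (snd (snd p))"

lemma DERIV_ln_abs: "(y::real) \<noteq> 0 \<Longrightarrow> DERIV (\<lambda>y. ln \<bar>y\<bar>) y :> 1 / y"
proof -
  assume y: "y \<noteq> 0"
  have eq: "(\<lambda>y::real. ln \<bar>y\<bar>) = (\<lambda>y. ln (y^2) / 2)"
  proof
    fix z :: real
    show "ln \<bar>z\<bar> = ln (z^2) / 2"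
    proof (cases "z = 0")
      case False
      have "ln (z^2) = ln (\<bar>z\<bar>^2)" by simp
      also have "\<dots> = 2 * ln \<bar>z\<bar>" using False by (subst ln_realpow) auto
      finally show ?thesis by simp
    qed simp
  qed
  have "DERIV (\<lambda>y. ln (y^2) / 2) y :> (1 / y^2) * (2 * y) / 2"
    by (rule DERIV_cdivide, rule DERIV_chain2[where f=ln], rule DERIV_ln_divide)
       (use y in \<open>auto intro!: derivative_eq_intros\<close>)
  moreover have "(1 / y^2) * (2 * y) / 2 = 1 / y" using y by (simp add: power2_eq_square field_simps)
  ultimately show ?thesis by (simp add: eq)
qed

text \<open>\<open>move s x t y\<close> is the point \<open>(s, x, t)\<close> with one coordinate replaced by \<open>y\<close>, and
  \<open>coord s x t\<close> is the value of that coordinate; \<open>D\<close> is the partial derivative in it.\<close>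
locale coord_deriv =
  fixes move :: "real \<Rightarrow> real \<Rightarrow> (nat \<Rightarrow> real) \<Rightarrow> real \<Rightarrow> real \<times> real \<times> (nat \<Rightarrow> real)"
    and coord :: "real \<Rightarrow> real \<Rightarrow> (nat \<Rightarrow> real) \<Rightarrow> real"
  assumes move_coord: "move s x t (coord s x t) = (s, x, t)"
begin

definition D :: "cf \<Rightarrow> cf" where
  "D f = (\<lambda>s x t. deriv (\<lambda>y. cf_at f (move s x t y)) (coord s x t))"
definition diffble :: "cf \<Rightarrow> bool" where
  "diffble f \<longleftrightarrow> (\<forall>s x t. (\<lambda>y. cf_at f (move s x t y)) differentiable (at (coord s x t)))"
definition has_D :: "cf \<Rightarrow> cf \<Rightarrow> bool" where
  "has_D f g \<longleftrightarrow>
     (\<forall>s x t. ((\<lambda>y. cf_at f (move s x t y)) has_real_derivative g s x t) (at (coord s x t)))"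

lemma cf_at_coord: "cf_at f (move s x t (coord s x t)) = f s x t"
  by (simp add: move_coord cf_at_def)

lemma has_D_diffble: "has_D f g \<Longrightarrow> diffble f"
  unfolding has_D_def diffble_def using real_differentiable_def by blast
lemma has_D_imp_D: "has_D f g \<Longrightarrow> D f = g"
  unfolding has_D_def D_def by (intro ext) (simp add: DERIV_imp_deriv)
lemma diffble_has_D: "diffble f \<Longrightarrow> has_D f (D f)"
  unfolding has_D_def D_def diffble_def by (simp add: DERIV_deriv_iff_real_differentiable)

lemma has_D_cong: "has_D f g \<Longrightarrow> f = f2 \<Longrightarrow> g = g2 \<Longrightarrow> has_D f2 g2" by simp

lemma has_D_const: "has_D (\<lambda>s x t. c) (\<lambda>s x t. 0)"
  by (simp add: has_D_def cf_at_def)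
lemma has_D_add: "has_D f f' \<Longrightarrow> has_D g g' \<Longrightarrow>
    has_D (\<lambda>s x t. f s x t + g s x t) (\<lambda>s x t. f' s x t + g' s x t)"
  unfolding has_D_def cf_at_def by (auto intro!: DERIV_add)
lemma has_D_diff: "has_D f f' \<Longrightarrow> has_D g g' \<Longrightarrow>
    has_D (\<lambda>s x t. f s x t - g s x t) (\<lambda>s x t. f' s x t - g' s x t)"
  unfolding has_D_def cf_at_def by (auto intro!: DERIV_diff)
lemma has_D_sum: "finite I \<Longrightarrow> (\<And>i. i \<in> I \<Longrightarrow> has_D (F i) (F' i)) \<Longrightarrow>
    has_D (\<lambda>s x t. \<Sum>i\<in>I. F i s x t) (\<lambda>s x t. \<Sum>i\<in>I. F' i s x t)"
  unfolding has_D_def cf_at_def by (auto intro!: DERIV_sum)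

lemma has_D_mult: "has_D f f' \<Longrightarrow> has_D g g' \<Longrightarrow>
    has_D (\<lambda>s x t. f s x t * g s x t) (\<lambda>s x t. f' s x t * g s x t + f s x t * g' s x t)"
  unfolding has_D_def
proof (intro allI)
  fix s x t
  assume "\<forall>s x t. ((\<lambda>y. cf_at f (move s x t y)) has_real_derivative f' s x t) (at (coord s x t))"
    and "\<forall>s x t. ((\<lambda>y. cf_at g (move s x t y)) has_real_derivative g' s x t) (at (coord s x t))"
  from DERIV_mult[OF this[rule_format]]
  show "((\<lambda>y. cf_at (\<lambda>s x t. f s x t * g s x t) (move s x t y)) has_real_derivative
      f' s x t * g s x t + f s x t * g' s x t) (at (coord s x t))"
    by (simp add: cf_at_coord algebra_simps) (simp add: cf_at_def)
qed

lemma has_D_cmult: "has_D f f' \<Longrightarrow> has_D (\<lambda>s x t. c * f s x t) (\<lambda>s x t. c * f' s x t)"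
  using has_D_mult[OF has_D_const[of c]] by simp

lemma has_D_chain:
  assumes "has_D f f'" and "\<And>s x t. (\<phi> has_real_derivative \<phi>' s x t) (at (f s x t))"
  shows "has_D (\<lambda>s x t. \<phi> (f s x t)) (\<lambda>s x t. \<phi>' s x t * f' s x t)"
  unfolding has_D_def
proof (intro allI)
  fix s x t
  have "((\<lambda>y. \<phi> (cf_at f (move s x t y))) has_real_derivative \<phi>' s x t * f' s x t) (at (coord s x t))"
    using assms unfolding has_D_def by (intro DERIV_chain2) (auto simp: cf_at_coord)
  then show "((\<lambda>y. cf_at (\<lambda>s x t. \<phi> (f s x t)) (move s x t y)) has_real_derivative
      \<phi>' s x t * f' s x t) (at (coord s x t))"
    by (simp add: cf_at_def)
qed

lemma has_D_power: "has_D f f' \<Longrightarrow>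
    has_D (\<lambda>s x t. f s x t ^ n) (\<lambda>s x t. of_nat n * (f' s x t * f s x t ^ (n - 1)))"
  by (rule has_D_cong[OF has_D_chain[OF _ DERIV_pow]]) (auto simp: fun_eq_iff)

lemma has_D_inverse: "has_D f f' \<Longrightarrow> (\<And>s x t. f s x t \<noteq> 0) \<Longrightarrow>
    has_D (\<lambda>s x t. 1 / f s x t) (\<lambda>s x t. - f' s x t / (f s x t)\<^sup>2)"
  by (rule has_D_cong[OF has_D_chain[OF _ DERIV_inverse]])
    (auto simp: fun_eq_iff divide_inverse power2_eq_square)

lemma has_D_ln_abs: "has_D f f' \<Longrightarrow> (\<And>s x t. f s x t \<noteq> 0) \<Longrightarrow>
    has_D (\<lambda>s x t. ln \<bar>f s x t\<bar>) (\<lambda>s x t. f' s x t / f s x t)"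
  by (rule has_D_cong[OF has_D_chain[OF _ DERIV_ln_abs]]) auto

lemma has_D_divide:
  "has_D f f' \<Longrightarrow> has_D g g' \<Longrightarrow> (\<And>s x t. g s x t \<noteq> 0) \<Longrightarrow>
    has_D (\<lambda>s x t. f s x t / g s x t) (\<lambda>s x t. f' s x t / g s x t - f s x t * g' s x t / (g s x t)^2)"
proof -
  assume f: "has_D f f'" and g: "has_D g g'" and nz: "\<And>s x t. g s x t \<noteq> 0"
  show ?thesis
    by (rule has_D_cong[OF has_D_mult[OF f has_D_inverse[OF g nz]]]) (auto simp: field_simps)
qed

end

lemma shift_coeff_deriv_sum:
  fixes f :: "int \<Rightarrow> real" and m :: int and v w :: real
  defines "T n \<equiv> f n * ((of_int n gchoose nat (n-m)) * (of_nat (nat (n-m)) * (v * w ^ (nat (n-m) - 1))))"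
  shows "(\<Sum>n\<in>{m..d}. T n) = v * (of_int (m+1) * (\<Sum>n\<in>{m+1..d}. f n * shift_coeff w n (n - (m+1))))"
proof -
  have "(\<Sum>n\<in>{m..d}. T n) = (\<Sum>n\<in>{m+1..d}. T n)"
    by (rule sum.mono_neutral_right) (auto simp: T_def)
  also have "\<dots> = (\<Sum>n\<in>{m+1..d}. v * (of_int (m+1) * (f n * shift_coeff w n (n - (m+1)))))"
  proof (rule sum.cong[OF refl])
    fix n assume n: "n \<in> {m+1..d}"
    define k where "k = nat (n - (m+1))"
    have nk: "nat (n - m) = Suc k" using n by (simp add: k_def nat_eq_iff)
    have "(of_int n :: real) * (of_int n gchoose k)
        = of_nat k * (of_int n gchoose k) + of_nat (Suc k) * (of_int n gchoose (Suc k))"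
      by (rule gbinomial_mult_1)
    hence "of_nat (Suc k) * (of_int n gchoose (Suc k))
        = (of_int n - of_nat k) * (of_int n gchoose k :: real)"
      by (simp add: algebra_simps)
    also have "(of_int n - of_nat k :: real) = of_int (m+1)" using n by (simp add: k_def)
    finally have key: "of_nat (Suc k) * (of_int n gchoose (Suc k))
        = of_int (m+1) * (of_int n gchoose k :: real)" .
    show "T n = v * (of_int (m+1) * (f n * shift_coeff w n (n - (m+1))))"
      unfolding T_def nk shift_coeff_def k_def[symmetric] using key
      by (simp only: diff_Suc_1) (metis (no_types, lifting) mult.assoc mult.left_commute)
  qed
  also have "\<dots> = v * (of_int (m+1) * (\<Sum>n\<in>{m+1..d}. f n * shift_coeff w n (n - (m+1))))"
    by (simp add: sum_distrib_left)
  finally show ?thesis .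
qed

context coord_deriv begin

definition ser_D :: "ser \<Rightarrow> ser" where "ser_D a = (\<lambda>n. D (a n))"
definition ser_diffble :: "ser \<Rightarrow> bool" where "ser_diffble a \<longleftrightarrow> (\<forall>n. diffble (a n))"

lemma D_const: "D (\<lambda>s x t. c) = (\<lambda>s x t. 0)" by (rule has_D_imp_D[OF has_D_const])
lemma diffble_const: "diffble (\<lambda>s x t. c)" by (rule has_D_diffble[OF has_D_const])

lemma has_D_uminus: "has_D f f' \<Longrightarrow> has_D (\<lambda>s x t. - f s x t) (\<lambda>s x t. - f' s x t)"
  using has_D_cmult[of f f' "-1"] by simp

lemma ser_deg_le_ser_D: "ser_deg_le a d \<Longrightarrow> ser_deg_le (ser_D a) d"
proof (unfold ser_deg_le_def, intro allI impI)
  fix n s x t assume "\<forall>n>d. \<forall>s x t. a n s x t = 0" "d < n"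
  then have "a n = (\<lambda>s x t. 0)" by (intro ext) simp
  then show "ser_D a n s x t = 0" by (simp add: ser_D_def D_const)
qed

lemma ser_bounded_ser_D [simp]: "ser_bounded a \<Longrightarrow> ser_bounded (ser_D a)"
  by (meson ser_boundedI ser_bounded_def ser_deg_le_ser_D)

lemma ser_diffble_has_D: "ser_diffble a \<Longrightarrow> has_D (a n) (ser_D a n)"
  by (simp add: ser_diffble_def ser_D_def diffble_has_D)

lemma ser_diffbleI: "(\<And>n. has_D (a n) (b n)) \<Longrightarrow> ser_diffble a"
  by (auto simp: ser_diffble_def intro: has_D_diffble)

lemma ser_D_eqI: "(\<And>n. has_D (a n) (b n)) \<Longrightarrow> ser_D a = b"
  by (auto simp: ser_D_def intro: has_D_imp_D)

lemma has_D_ser_mult: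
  assumes "ser_bounded a" "ser_bounded b" "ser_diffble a" "ser_diffble b"
  shows "has_D (ser_mult a b n) (ser_add (ser_mult (ser_D a) b) (ser_mult a (ser_D b)) n)"
proof -
  obtain d e where d: "ser_deg_le a d" and e: "ser_deg_le b e" using assms
    by (auto simp: ser_bounded_def)
  have eq: "ser_mult a b n = (\<lambda>s x t. \<Sum>i\<in>{n-e..d}. a i s x t * b (n-i) s x t)"
    by (intro ext) (simp add: ser_mult_eq_sum[OF d e])
  have "has_D (ser_mult a b n)
      (\<lambda>s x t. \<Sum>i\<in>{n-e..d}. ser_D a i s x t * b (n-i) s x t + a i s x t * ser_D b (n-i) s x t)"
    unfolding eq by (intro has_D_sum has_D_mult ser_diffble_has_D assms) auto
  moreover have "(\<lambda>s x t. \<Sum>i\<in>{n-e..d}. ser_D a i s x t * b (n-i) s x t + a i s x t * ser_D b (n-i) s x t)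
      = ser_add (ser_mult (ser_D a) b) (ser_mult a (ser_D b)) n"
    by (intro ext) (simp add: ser_add_def ser_mult_eq_sum[OF ser_deg_le_ser_D[OF d] e]
        ser_mult_eq_sum[OF d ser_deg_le_ser_D[OF e]] sum.distrib)
  ultimately show ?thesis by simp
qed

lemma ser_diffble_mult [simp]:
  "ser_bounded a \<Longrightarrow> ser_bounded b \<Longrightarrow> ser_diffble a \<Longrightarrow> ser_diffble b \<Longrightarrow> ser_diffble (ser_mult a b)"
  by (rule ser_diffbleI, rule has_D_ser_mult)
lemma ser_D_mult: "ser_bounded a \<Longrightarrow> ser_bounded b \<Longrightarrow> ser_diffble a \<Longrightarrow> ser_diffble b \<Longrightarrow>
    ser_D (ser_mult a b) = ser_add (ser_mult (ser_D a) b) (ser_mult a (ser_D b))"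
  by (rule ser_D_eqI, rule has_D_ser_mult)

lemma ser_diffble_add [simp]: "ser_diffble a \<Longrightarrow> ser_diffble b \<Longrightarrow> ser_diffble (ser_add a b)"
  unfolding ser_add_def by (rule ser_diffbleI, rule has_D_add; rule ser_diffble_has_D)
lemma ser_D_add: "ser_diffble a \<Longrightarrow> ser_diffble b \<Longrightarrow> ser_D (ser_add a b) = ser_add (ser_D a) (ser_D b)"
  unfolding ser_add_def by (rule ser_D_eqI, rule has_D_add; rule ser_diffble_has_D)

lemma ser_diffble_diff [simp]: "ser_diffble a \<Longrightarrow> ser_diffble b \<Longrightarrow> ser_diffble (ser_diff a b)"
  unfolding ser_diff_def by (rule ser_diffbleI, rule has_D_diff; rule ser_diffble_has_D)
lemma ser_D_diff: "ser_diffble a \<Longrightarrow> ser_diffble b \<Longrightarrow> ser_D (ser_diff a b) = ser_diff (ser_D a) (ser_D b)"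
  unfolding ser_diff_def by (rule ser_D_eqI, rule has_D_diff; rule ser_diffble_has_D)

lemma ser_diffble_smul [simp]: "diffble c \<Longrightarrow> ser_diffble a \<Longrightarrow> ser_diffble (ser_smul c a)"
  unfolding ser_smul_def by (rule ser_diffbleI, rule has_D_mult[OF diffble_has_D ser_diffble_has_D])
lemma ser_D_smul: "diffble c \<Longrightarrow> ser_diffble a \<Longrightarrow>
    ser_D (ser_smul c a) = ser_add (ser_smul (D c) a) (ser_smul c (ser_D a))"
  unfolding ser_smul_def ser_add_def by (rule ser_D_eqI, rule has_D_mult[OF diffble_has_D ser_diffble_has_D])

lemma has_D_ser_const: "diffble c \<Longrightarrow> has_D (ser_const c n) (ser_const (D c) n)"
  by (cases "n = 0") (auto simp: ser_const_def diffble_has_D has_D_const)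
lemma ser_diffble_const [simp]: "diffble c \<Longrightarrow> ser_diffble (ser_const c)"
  by (rule ser_diffbleI, rule has_D_ser_const)
lemma ser_D_const: "diffble c \<Longrightarrow> ser_D (ser_const c) = ser_const (D c)"
  by (rule ser_D_eqI, rule has_D_ser_const)

lemma ser_diffble_one [simp]: "ser_diffble ser_one" by (simp add: ser_one_eq_const diffble_const)
lemma ser_D_one: "ser_D ser_one = ser_const (\<lambda>s x t. 0)"
  by (simp add: ser_one_eq_const diffble_const ser_D_const D_const)

lemma has_D_ser_monom: "has_D (ser_monom N n) (ser_const (\<lambda>s x t. 0) n)"
  by (cases "n = N") (auto simp: ser_monom_def ser_const_def has_D_const)
lemma ser_diffble_monom [simp]: "ser_diffble (ser_monom N)" by (rule ser_diffbleI, rule has_D_ser_monom)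
lemma ser_D_monom: "ser_D (ser_monom N) = ser_const (\<lambda>s x t. 0)"
  by (rule ser_D_eqI, rule has_D_ser_monom)

lemma ser_diffble_pow [simp]: "ser_bounded a \<Longrightarrow> ser_diffble a \<Longrightarrow> ser_diffble (ser_pow a n)"
  by (induction n) auto

lemma ser_diffble_proj_pos: "ser_diffble a \<Longrightarrow> ser_diffble (proj_pos a)"
  by (auto simp: ser_diffble_def proj_pos_def cf0_def diffble_const)

text \<open>Chain rule for the substitution \<open>k \<mapsto> k - u\<close>: the coefficients of \<open>a(k - u)\<close> are
  polynomials in \<open>u\<close>, and differentiating them in \<open>u\<close> is \<open>-\<partial>\<^sub>k\<close>.\<close>
lemma has_D_ser_shift:
  assumes u: "diffble u" and a: "ser_bounded a" "ser_diffble a"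
  shows "has_D (ser_shift a u m)
           (ser_diff (ser_shift (ser_D a) u) (ser_smul (D u) (ser_dk (ser_shift a u))) m)"
proof -
  obtain d where d: "ser_deg_le a d" using a by (auto simp: ser_bounded_def)
  define G where "G n = (of_int n gchoose nat (n-m) :: real)" for n
  have eq: "ser_shift a u m = (\<lambda>s x t. \<Sum>n\<in>{m..d}. a n s x t * (G n * (- u s x t) ^ nat (n-m)))"
    by (intro ext) (simp add: ser_shift_eq_sum[OF d] shift_coeff_def G_def)
  have hu: "has_D (\<lambda>s x t. - u s x t) (\<lambda>s x t. - D u s x t)" by (intro has_D_uminus diffble_has_D u)
  have "has_D (ser_shift a u m) (\<lambda>s x t. \<Sum>n\<in>{m..d}. ser_D a n s x t * (G n * (- u s x t) ^ nat (n-m))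
           + a n s x t * (G n * (of_nat (nat (n-m)) * (- D u s x t * (- u s x t) ^ (nat (n-m) - 1)))))"
    unfolding eq by (intro has_D_sum has_D_mult ser_diffble_has_D a has_D_cmult has_D_power hu) auto
  moreover have "(\<lambda>s x t. \<Sum>n\<in>{m..d}. ser_D a n s x t * (G n * (- u s x t) ^ nat (n-m))
           + a n s x t * (G n * (of_nat (nat (n-m)) * (- D u s x t * (- u s x t) ^ (nat (n-m) - 1)))))
      = ser_diff (ser_shift (ser_D a) u) (ser_smul (D u) (ser_dk (ser_shift a u))) m"
  proof (intro ext)
    fix s x t
    show "(\<Sum>n\<in>{m..d}. ser_D a n s x t * (G n * (- u s x t) ^ nat (n-m))
           + a n s x t * (G n * (of_nat (nat (n-m)) * (- D u s x t * (- u s x t) ^ (nat (n-m) - 1)))))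
        = ser_diff (ser_shift (ser_D a) u) (ser_smul (D u) (ser_dk (ser_shift a u))) m s x t"
      unfolding sum.distrib G_def shift_coeff_deriv_sum[where f="\<lambda>n. a n s x t"]
      by (simp add: ser_diff_def ser_smul_def ser_dk_def ser_shift_eq_sum[OF ser_deg_le_ser_D[OF d]]
          ser_shift_eq_sum[OF d] shift_coeff_def)
  qed
  ultimately show ?thesis by simp
qed

lemma ser_diffble_shift [simp]:
  "diffble u \<Longrightarrow> ser_bounded a \<Longrightarrow> ser_diffble a \<Longrightarrow> ser_diffble (ser_shift a u)"
  by (rule ser_diffbleI, rule has_D_ser_shift)
lemma ser_D_shift: "diffble u \<Longrightarrow> ser_bounded a \<Longrightarrow> ser_diffble a \<Longrightarrow>
   ser_D (ser_shift a u) = ser_diff (ser_shift (ser_D a) u) (ser_smul (D u) (ser_dk (ser_shift a u)))"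
  by (rule ser_D_eqI, rule has_D_ser_shift)

end

section \<open>The logarithm of a series\<close>

fun log1p_trunc :: "ser \<Rightarrow> nat \<Rightarrow> ser" where
  "log1p_trunc Q 0 = ser_const (\<lambda>s x t. 0)"
| "log1p_trunc Q (Suc J)
    = ser_add (log1p_trunc Q J) (ser_smul (\<lambda>s x t. (-1)^(J+2) / real (Suc J)) (ser_pow Q (Suc J)))"

text \<open>\<open>log (1 + Q)\<close> for \<open>Q\<close> of degree \<open>\<le> -1\<close>, where only the powers \<open>Q\<^sup>j\<close> with \<open>j \<le> -n\<close> contribute
  to the coefficient of \<open>k\<^sup>n\<close>.\<close>
definition log1p_ser :: "ser \<Rightarrow> ser" where
  "log1p_ser Q = (\<lambda>n s x t.
     if n < 0 then (\<Sum>j\<in>{1..nat (- n)}. (-1) ^ (j + 1) / real j * ser_pow Q j n s x t) else 0)"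

lemma log1p_trunc_nth:
  "log1p_trunc Q J n s x t = (\<Sum>j\<in>{1..J}. (-1) ^ (j + 1) / real j * ser_pow Q j n s x t)"
proof (induction J)
  case 0 thus ?case by (simp add: ser_const_def)
next
  case (Suc J)
  have "{1..Suc J} = insert (Suc J) {1..J}" by auto
  thus ?case using Suc by (simp add: ser_add_def ser_smul_def del: ser_pow.simps)
qed

lemma ser_deg_le_log1p_trunc: "ser_deg_le Q (-1) \<Longrightarrow> ser_deg_le (log1p_trunc Q J) (-1)"
proof (induction J)
  case 0 thus ?case by (auto simp: ser_deg_le_def ser_const_def)
next
  case (Suc J)
  have "ser_deg_le (ser_pow Q (Suc J)) (int (Suc J) * -1)" by (rule ser_deg_le_pow[OF Suc.prems])
  hence "ser_deg_le (ser_pow Q (Suc J)) (-1)" by (rule ser_deg_le_mono) simp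
  hence "ser_deg_le (ser_add (log1p_trunc Q J) (ser_smul c (ser_pow Q (Suc J)))) (-1)" for c
    using ser_deg_le_add[OF Suc.IH[OF Suc.prems] ser_deg_le_smul] by fastforce
  thus ?case by (simp only: log1p_trunc.simps)
qed

lemma ser_pow_eq_0_below: "ser_deg_le Q (-1) \<Longrightarrow> - int j < m \<Longrightarrow> ser_pow Q j m s x t = 0"
  using ser_deg_le_pow[of Q "-1" j] by (auto simp: ser_deg_le_def)

lemma log1p_ser_eq_trunc:
  assumes Q: "ser_deg_le Q (-1)" and m: "- int J \<le> m"
  shows "log1p_ser Q m = log1p_trunc Q J m"
proof (intro ext)
  fix s x t
  show "log1p_ser Q m s x t = log1p_trunc Q J m s x t"
  proof (cases "m < 0")
    case True
    have "(\<Sum>j\<in>{1..J}. (-1) ^ (j + 1) / real j * ser_pow Q j m s x t)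
        = (\<Sum>j\<in>{1..nat (-m)}. (-1) ^ (j + 1) / real j * ser_pow Q j m s x t)"
    proof (rule sum.mono_neutral_right)
      show "{1..nat (- m)} \<subseteq> {1..J}" using m by auto
      show "\<forall>i\<in>{1..J} - {1..nat (- m)}. (-1) ^ (i + 1) / real i * ser_pow Q i m s x t = 0"
        using True by (auto intro!: ser_pow_eq_0_below[OF Q])
    qed auto
    thus ?thesis using True by (simp add: log1p_ser_def log1p_trunc_nth)
  next
    case False
    have "(\<Sum>j\<in>{1..J}. (-1) ^ (j + 1) / real j * ser_pow Q j m s x t) = 0"
      using False by (auto intro!: sum.neutral ser_pow_eq_0_below[OF Q])
    thus ?thesis using False by (simp add: log1p_ser_def log1p_trunc_nth)
  qed
qed

lemma ser_deg_le_log1p_ser: "ser_deg_le (log1p_ser Q) (-1)" by (auto simp: ser_deg_le_def log1p_ser_def)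

lemma fls_const_alternating_inverse:
  "fls_const ((-1)^(J+2) / real (Suc J)) * (of_nat (Suc J) * (X :: real fls)) = (-1)^J * X"
proof -
  have "fls_const ((-1)^(J+2) / real (Suc J)) * of_nat (Suc J)
      = fls_const ((-1)^(J+2) / real (Suc J) * real (Suc J))"
    by (simp only: fls_of_nat fls_const_mult_const)
  also have "(-1)^(J+2) / real (Suc J) * real (Suc J) = (-1)^J" by simp
  also have "fls_const ((-1::real)^J) = (-1)^J" by (simp add: fls_const_power)
  finally show ?thesis by (simp add: mult.assoc[symmetric])
qed

locale ser_derivation =
  fixes Der :: "ser \<Rightarrow> ser" and dom :: "ser \<Rightarrow> bool"
  assumes Der_mult: "ser_bounded a \<Longrightarrow> ser_bounded b \<Longrightarrow> dom a \<Longrightarrow> dom b \<Longrightarrow>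
      Der (ser_mult a b) = ser_add (ser_mult (Der a) b) (ser_mult a (Der b))"
    and dom_mult: "ser_bounded a \<Longrightarrow> ser_bounded b \<Longrightarrow> dom a \<Longrightarrow> dom b \<Longrightarrow> dom (ser_mult a b)"
    and Der_add: "dom a \<Longrightarrow> dom b \<Longrightarrow> Der (ser_add a b) = ser_add (Der a) (Der b)"
    and dom_add: "dom a \<Longrightarrow> dom b \<Longrightarrow> dom (ser_add a b)"
    and Der_smul_const: "dom a \<Longrightarrow> Der (ser_smul (\<lambda>s x t. c) a) = ser_smul (\<lambda>s x t. c) (Der a)"
    and dom_smul_const: "dom a \<Longrightarrow> dom (ser_smul (\<lambda>s x t. c) a)"
    and Der_one: "Der ser_one = ser_const (\<lambda>s x t. 0)"
    and dom_one: "dom ser_one"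
    and Der_zero: "Der (ser_const (\<lambda>s x t. 0)) = ser_const (\<lambda>s x t. 0)"
    and dom_zero: "dom (ser_const (\<lambda>s x t. 0))"
    and ser_deg_le_Der: "ser_deg_le a d \<Longrightarrow> ser_deg_le (Der a) d"
    and Der_local: "(\<And>m. m \<ge> n \<Longrightarrow> X m = Y m) \<Longrightarrow> m \<ge> n \<Longrightarrow> Der X m = Der Y m"
begin

lemma ser_bounded_Der [simp]: "ser_bounded a \<Longrightarrow> ser_bounded (Der a)"
  by (meson ser_boundedI ser_bounded_def ser_deg_le_Der)

lemma dom_pow: "ser_bounded a \<Longrightarrow> dom a \<Longrightarrow> dom (ser_pow a n)"
  by (induction n) (simp_all add: dom_one dom_mult)

lemma ser_fls_Der_pow:
  assumes "ser_bounded a" "dom a"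
  shows "ser_fls (Der (ser_pow a (Suc n))) s x t
      = of_nat (Suc n) * ser_fls a s x t ^ n * ser_fls (Der a) s x t"
proof (induction n)
  case 0 thus ?case using assms by (simp add: Der_mult dom_one Der_one)
next
  case (Suc n)
  have e: "Der (ser_pow a (Suc (Suc n)))
      = ser_add (ser_mult (Der a) (ser_pow a (Suc n))) (ser_mult a (Der (ser_pow a (Suc n))))"
    using assms by (simp only: ser_pow.simps(2)[of a "Suc n"])
      (rule Der_mult, simp_all add: assms dom_pow[OF assms] del: ser_pow.simps)
  have "ser_fls (Der (ser_pow a (Suc (Suc n)))) s x t
      = ser_fls (Der a) s x t * ser_fls a s x t ^ Suc n
        + ser_fls a s x t * ser_fls (Der (ser_pow a (Suc n))) s x t"
    using assms by (simp add: e del: ser_pow.simps)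
  also have "\<dots> = of_nat (Suc (Suc n)) * ser_fls a s x t ^ Suc n * ser_fls (Der a) s x t"
    unfolding Suc.IH by (simp add: algebra_simps del: ser_pow.simps)
  finally show ?case .
qed

lemma dom_log1p_trunc: "ser_bounded Q \<Longrightarrow> dom Q \<Longrightarrow> dom (log1p_trunc Q J)"
  by (induction J) (auto intro!: dom_add dom_smul_const dom_pow dom_zero simp del: ser_pow.simps)

lemma ser_bounded_log1p_trunc: "ser_bounded Q \<Longrightarrow> ser_bounded (log1p_trunc Q J)"
  by (induction J) (auto simp del: ser_pow.simps)

lemma one_plus_mult_Der_log1p_trunc:
  assumes "ser_bounded Q" "dom Q"
  shows "ser_fls (ser_mult (ser_add ser_one Q) (Der (log1p_trunc Q J))) s x t
       = ser_fls (Der Q) s x t - (- ser_fls Q s x t) ^ J * ser_fls (Der Q) s x t"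
proof (induction J)
  case 0 thus ?case using assms by (simp add: Der_zero)
next
  case (Suc J)
  define q where "q = ser_fls Q s x t"
  define d where "d = ser_fls (Der Q) s x t"
  define S where "S = ser_fls (Der (log1p_trunc Q J)) s x t"
  have IH: "(1 + q) * S = d - (- q) ^ J * d" using Suc.IH assms ser_bounded_log1p_trunc[OF assms(1)]
    by (simp add: q_def d_def S_def)
  have "ser_fls (Der (log1p_trunc Q (Suc J))) s x t
       = S + fls_const ((-1)^(J+2) / real (Suc J)) * ser_fls (Der (ser_pow Q (Suc J))) s x t"
    using assms by (simp add: Der_add Der_smul_const dom_log1p_trunc dom_smul_const dom_pow
        ser_bounded_log1p_trunc S_def del: ser_pow.simps)
  also have "\<dots> = S + (-1)^J * (q ^ J * d)"
    unfolding ser_fls_Der_pow[OF assms] q_def[symmetric] d_def[symmetric]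
    using fls_const_alternating_inverse[of J "q ^ J * d"] by (simp add: mult.assoc)
  finally have "ser_fls (Der (log1p_trunc Q (Suc J))) s x t = S + (-1)^J * (q ^ J * d)" .
  hence "ser_fls (ser_mult (ser_add ser_one Q) (Der (log1p_trunc Q (Suc J)))) s x t
      = (1 + q) * (S + (-1)^J * (q ^ J * d))"
    using assms ser_bounded_log1p_trunc[OF assms(1)] by (simp add: q_def del: log1p_trunc.simps)
  also have "\<dots> = (1 + q) * S + (1 + q) * ((-1)^J * (q ^ J * d))" by (simp add: algebra_simps)
  also have "\<dots> = d - (- q) ^ Suc J * d"
    unfolding IH by (simp add: power_minus' algebra_simps power_mult_distrib)
  finally show ?case by (simp add: q_def d_def)
qed

text \<open>Truncation suffices: the error term \<open>(-Q)\<^sup>J Der Q\<close> only affects coefficients of degree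
  \<open>\<le> -J\<close>, and by \<open>Der_local\<close> so does replacing \<open>log1p_ser Q\<close> by its truncation.\<close>
lemma one_plus_mult_Der_log1p:
  assumes Q: "ser_deg_le Q (-1)" "dom Q"
  shows "ser_mult (ser_add ser_one Q) (Der (log1p_ser Q)) = Der Q"
proof (intro ext)
  fix n s x t
  have bQ: "ser_bounded Q" by (rule ser_boundedI[OF Q(1)])
  define J where "J = nat (- n) + 1"
  have nJ: "- int J \<le> n" "- int J - 1 < n" by (auto simp: J_def)
  have ub1: "ser_deg_le (ser_add ser_one Q) 0" using ser_deg_le_add[OF ser_deg_le_one Q(1)] by simp
  have agree: "\<And>m. m \<ge> n \<Longrightarrow> Der (log1p_ser Q) m = Der (log1p_trunc Q J) m"
    by (rule Der_local[where n=n]) (use nJ in \<open>auto intro!: log1p_ser_eq_trunc[OF Q(1)]\<close>)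
  have "ser_mult (ser_add ser_one Q) (Der (log1p_ser Q)) n s x t
      = ser_mult (ser_add ser_one Q) (Der (log1p_trunc Q J)) n s x t"
    by (simp add: ser_mult_eq_sum[OF ub1 ser_deg_le_Der[OF ser_deg_le_log1p_ser]]
        ser_mult_eq_sum[OF ub1 ser_deg_le_Der[OF ser_deg_le_log1p_trunc[OF Q(1)]]] agree)
  also have "\<dots> = ser_fls (ser_mult (ser_add ser_one Q) (Der (log1p_trunc Q J))) s x t $$ (-n)"
    using bQ ser_bounded_log1p_trunc[OF bQ] by (simp add: ser_fls_nth del: ser_fls_mult)
  also have "\<dots> = (ser_fls (Der Q) s x t - (- ser_fls Q s x t) ^ J * ser_fls (Der Q) s x t) $$ (-n)"
    by (simp only: one_plus_mult_Der_log1p_trunc[OF bQ Q(2)])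
  also have "(- ser_fls Q s x t) ^ J * ser_fls (Der Q) s x t
      = ser_fls (ser_mult (ser_pow (ser_smul (\<lambda>s x t. -1) Q) J) (Der Q)) s x t"
    using bQ by (simp add: power_mult_distrib)
  also have "(ser_fls (Der Q) s x t
        - ser_fls (ser_mult (ser_pow (ser_smul (\<lambda>s x t. -1) Q) J) (Der Q)) s x t) $$ (-n)
      = Der Q n s x t - ser_mult (ser_pow (ser_smul (\<lambda>s x t. -1) Q) J) (Der Q) n s x t"
    using bQ by (simp add: ser_fls_nth del: ser_fls_mult ser_fls_pow ser_fls_smul)
  also have "ser_mult (ser_pow (ser_smul (\<lambda>s x t. -1) Q) J) (Der Q) n s x t = 0"
  proof -
    have "ser_deg_le (ser_pow (ser_smul (\<lambda>s x t. -1) Q) J) (int J * -1)"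
      by (rule ser_deg_le_pow[OF ser_deg_le_smul[OF Q(1)]])
    from ser_deg_le_mult[OF this ser_deg_le_Der[OF Q(1)]] show ?thesis using nJ
      by (auto simp: ser_deg_le_def)
  qed
  finally show "ser_mult (ser_add ser_one Q) (Der (log1p_ser Q)) n s x t = Der Q n s x t" by simp
qed

end

lemma ser_dk_mult:
  assumes "ser_bounded a" "ser_bounded b"
  shows "ser_dk (ser_mult a b) = ser_add (ser_mult (ser_dk a) b) (ser_mult a (ser_dk b))"
  by (rule ser_eqI) (use assms in \<open>simp_all add: algebra_simps\<close>)

lemma ser_dk_add: "ser_dk (ser_add a b) = ser_add (ser_dk a) (ser_dk b)"
  by (auto simp: ser_dk_def ser_add_def algebra_simps)
lemma ser_dk_diff: "ser_dk (ser_diff a b) = ser_diff (ser_dk a) (ser_dk b)"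
  by (auto simp: ser_dk_def ser_diff_def algebra_simps)
lemma ser_dk_smul: "ser_dk (ser_smul c a) = ser_smul c (ser_dk a)"
  by (auto simp: ser_dk_def ser_smul_def algebra_simps)
lemma ser_dk_const: "ser_dk (ser_const c) = ser_const (\<lambda>s x t. 0)"
  by (intro ext) (auto simp: ser_dk_def ser_const_def)
lemma ser_dk_one: "ser_dk ser_one = ser_const (\<lambda>s x t. 0)"
  by (simp add: ser_one_eq_const ser_dk_const)
lemma ser_dk_monom: "ser_dk (ser_monom N) = ser_smul (\<lambda>s x t. of_int N) (ser_monom (N - 1))"
  by (auto simp: ser_dk_def ser_monom_def ser_smul_def)

interpretation dk: ser_derivation ser_dk "\<lambda>_. True"
proof
  show "\<And>a d. ser_deg_le a d \<Longrightarrow> ser_deg_le (ser_dk a) d" using ser_deg_le_dk ser_deg_le_mono by fastforce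
  show "\<And>n X Y m. (\<And>m. n \<le> m \<Longrightarrow> X m = Y m) \<Longrightarrow> n \<le> m \<Longrightarrow> ser_dk X m = ser_dk Y m"
    by (simp add: ser_dk_def)
qed (simp_all add: ser_dk_mult ser_dk_add ser_dk_smul ser_dk_one ser_dk_const)

lemma ser_add_smul_zero: "ser_add (ser_smul (\<lambda>s x t. 0) a) b = b"
  by (simp add: ser_add_def ser_smul_def)

sublocale coord_deriv \<subseteq> sder: ser_derivation ser_D ser_diffble
proof
  show "\<And>a d. ser_deg_le a d \<Longrightarrow> ser_deg_le (ser_D a) d" by (rule ser_deg_le_ser_D)
  show "\<And>n X Y m. (\<And>m. n \<le> m \<Longrightarrow> X m = Y m) \<Longrightarrow> n \<le> m \<Longrightarrow> ser_D X m = ser_D Y m"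
    by (simp add: ser_D_def)
  show "\<And>a c. ser_diffble a \<Longrightarrow> ser_D (ser_smul (\<lambda>s x t. c) a) = ser_smul (\<lambda>s x t. c) (ser_D a)"
    by (simp add: ser_D_smul diffble_const D_const ser_add_smul_zero)
  show "ser_D (ser_const (\<lambda>s x t. 0)) = ser_const (\<lambda>s x t. 0)"
    by (simp add: ser_D_const diffble_const D_const)
qed (simp_all add: ser_D_mult ser_D_add ser_D_one diffble_const)

lemma ser_deg_le_logQ: "ser_deg_le (logQ N P) (-1)" by (auto simp: ser_deg_le_def logQ_def)
lemma ser_bounded_logQ [simp]: "ser_bounded (logQ N P)" by (rule ser_boundedI[OF ser_deg_le_logQ])
lemma ser_deg_le_logP: "ser_deg_le (logP_ser N P) 0" by (auto simp: ser_deg_le_def logP_ser_def)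
lemma ser_bounded_logP [simp]: "ser_bounded (logP_ser N P)" by (rule ser_boundedI[OF ser_deg_le_logP])
lemma ser_deg_le_dk_logP: "ser_deg_le (dk_logP N P) (-1)"
  by (auto simp: ser_deg_le_def dk_logP_def ser_dk_def logP_ser_def)
lemma ser_bounded_dk_logP [simp]: "ser_bounded (dk_logP N P)"
  by (rule ser_boundedI[OF ser_deg_le_dk_logP])

lemma ser_eq_lead_mult_one_plus_logQ:
  assumes P: "ser_deg_le P (int N)" and nz: "\<And>s x t. P (int N) s x t \<noteq> 0"
  shows "P = ser_mult (ser_smul (P (int N)) (ser_monom (int N))) (ser_add ser_one (logQ N P))"
proof (intro ext)
  fix n s x t
  have u1: "ser_deg_le (ser_smul (P (int N)) (ser_monom (int N))) (int N)"
    by (rule ser_deg_le_smul[OF ser_deg_le_monom])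
  have u2: "ser_deg_le (ser_add ser_one (logQ N P)) 0"
    using ser_deg_le_add[OF ser_deg_le_one ser_deg_le_logQ] by simp
  have "ser_mult (ser_smul (P (int N)) (ser_monom (int N))) (ser_add ser_one (logQ N P)) n s x t
      = (\<Sum>i\<in>{n..int N}.
          (if i = int N then P (int N) s x t else 0) * ser_add ser_one (logQ N P) (n - i) s x t)"
    by (subst ser_mult_eq_sum[OF u1 u2]) (auto simp: ser_smul_def ser_monom_def intro!: sum.cong)
  also have "\<dots> = (if n \<le> int N then P (int N) s x t * ser_add ser_one (logQ N P) (n - int N) s x t else 0)"
    by (simp add: if_distrib[of "\<lambda>c. c * _"] sum.delta' cong: if_cong)
  also have "\<dots> = P n s x t"
    using nz[of s x t] ser_deg_leD[OF P, of n s x t] by (auto simp: ser_add_def ser_one_def logQ_def)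
  finally show "P n s x t
      = ser_mult (ser_smul (P (int N)) (ser_monom (int N))) (ser_add ser_one (logQ N P)) n s x t"
    by simp
qed

lemma logP_ser_eq:
  "logP_ser N P = ser_add (ser_const (\<lambda>s x t. ln \<bar>P (int N) s x t\<bar>)) (log1p_ser (logQ N P))"
  by (intro ext) (auto simp: logP_ser_def ser_add_def ser_const_def log1p_ser_def)

lemma dk_logP_eq:
  "dk_logP N P = ser_add (ser_smul (\<lambda>s x t. real N) (ser_monom (-1))) (ser_dk (log1p_ser (logQ N P)))"
  unfolding dk_logP_def logP_ser_eq ser_dk_add ser_dk_const
  by (intro ext) (simp add: ser_add_def ser_smul_def ser_monom_def ser_const_def)

lemma ser_mult_dk_logP:
  assumes P: "ser_deg_le P (int N)" and nz: "\<And>s x t. P (int N) s x t \<noteq> 0"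
  shows "ser_mult P (dk_logP N P) = ser_dk P"
proof (rule ser_eqI)
  define Q where "Q = logQ N P"
  define p0 where "p0 = P (int N)"
  have Pd: "P = ser_mult (ser_smul p0 (ser_monom (int N))) (ser_add ser_one Q)"
    unfolding Q_def p0_def by (rule ser_eq_lead_mult_one_plus_logQ[OF P nz])
  have bQ: "ser_bounded Q" unfolding Q_def by simp
  have bL: "ser_bounded (log1p_ser Q)" by (rule ser_boundedI[OF ser_deg_le_log1p_ser])
  have log1p: "ser_mult (ser_add ser_one Q) (ser_dk (log1p_ser Q)) = ser_dk Q"
    unfolding Q_def by (rule dk.one_plus_mult_Der_log1p[OF ser_deg_le_logQ]) simp
  show "ser_bounded (ser_mult P (dk_logP N P))" "ser_bounded (ser_dk P)"
    using ser_boundedI[OF P] by simp_all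
  fix s x t
  define kN where "kN = ser_fls (ser_monom (int N)) s x t"
  have monom: "kN * ser_fls (ser_monom (-1)) s x t = ser_fls (ser_monom (int N - 1)) s x t"
    unfolding kN_def using ser_mult_monom[of "int N" "-1"]
    by (metis ser_fls_mult ser_bounded_monom diff_minus_eq_add minus_minus)
  have log1p': "(1 + ser_fls Q s x t) * ser_fls (ser_dk (log1p_ser Q)) s x t = ser_fls (ser_dk Q) s x t"
    using arg_cong[OF log1p, of "\<lambda>a. ser_fls a s x t"] bQ bL by simp
  have "ser_fls (ser_mult P (dk_logP N P)) s x t
      = fls_const (p0 s x t) * kN * (1 + ser_fls Q s x t) *
        (fls_const (real N) * ser_fls (ser_monom (-1)) s x t + ser_fls (ser_dk (log1p_ser Q)) s x t)"
    unfolding dk_logP_eq Q_def[symmetric] kN_def by (subst Pd) (use bQ bL in \<open>simp del: ser_fls_dk\<close>)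
  also have "\<dots> = fls_const (p0 s x t) * fls_const (real N) * (kN * ser_fls (ser_monom (-1)) s x t)
        * (1 + ser_fls Q s x t)
      + fls_const (p0 s x t) * kN * ((1 + ser_fls Q s x t) * ser_fls (ser_dk (log1p_ser Q)) s x t)"
    by (simp add: algebra_simps del: fls_const_mult_const)
  also have "\<dots> = ser_fls (ser_dk P) s x t"
    unfolding monom log1p' unfolding kN_def
    by (subst Pd) (use bQ in \<open>simp add: ser_dk_mult ser_dk_smul ser_dk_add ser_dk_one ser_dk_monom
        del: ser_fls_dk\<close>)
  finally show "ser_fls (ser_mult P (dk_logP N P)) s x t = ser_fls (ser_dk P) s x t" .
qed

context coord_deriv begin

lemma ser_diffble_logQ:
  assumes "ser_diffble P" "\<And>s x t. P (int N) s x t \<noteq> 0"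
  shows "ser_diffble (logQ N P)"
  unfolding ser_diffble_def
proof
  fix j
  have e: "logQ N P j = (if j < 0 then (\<lambda>s x t. P (int N + j) s x t / P (int N) s x t) else (\<lambda>s x t. 0))"
    by (auto simp: logQ_def)
  show "diffble (logQ N P j)"
    unfolding e using assms by (auto intro!: has_D_diffble[OF has_D_divide] ser_diffble_has_D diffble_const)
qed

lemma ser_diffble_log1p_ser:
  assumes "ser_bounded Q" "ser_diffble Q"
  shows "ser_diffble (log1p_ser Q)"
  unfolding ser_diffble_def
proof
  fix n
  have e: "log1p_ser Q n
      = (if n < 0 then (\<lambda>s x t. \<Sum>j\<in>{1..nat (- n)}. (-1) ^ (j + 1) / real j * ser_pow Q j n s x t)
      else (\<lambda>s x t. 0))"
    by (auto simp: log1p_ser_def)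
  show "diffble (log1p_ser Q n)"
  proof (cases "n < 0")
    case True
    have "has_D (\<lambda>s x t. \<Sum>j\<in>{1..nat (- n)}. (-1) ^ (j + 1) / real j * ser_pow Q j n s x t)
               (\<lambda>s x t. \<Sum>j\<in>{1..nat (- n)}. (-1) ^ (j + 1) / real j * ser_D (ser_pow Q j) n s x t)"
      by (rule has_D_sum) (simp, rule has_D_cmult, rule ser_diffble_has_D, rule ser_diffble_pow[OF assms])
    from has_D_diffble[OF this] show ?thesis unfolding e using True by simp
  next
    case False thus ?thesis unfolding e by (simp add: diffble_const)
  qed
qed

lemma
  assumes nz: "\<And>s x t. P (int N) s x t \<noteq> 0" and sP: "ser_diffble P"
  shows ser_diffble_logP: "ser_diffble (logP_ser N P)"
    and ser_D_logP: "ser_D (logP_ser N P) =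
      ser_add (ser_const (\<lambda>s x t. D (P (int N)) s x t / P (int N) s x t)) (ser_D (log1p_ser (logQ N P)))"
proof -
  have hl: "has_D (\<lambda>s x t. ln \<bar>P (int N) s x t\<bar>) (\<lambda>s x t. D (P (int N)) s x t / P (int N) s x t)"
    using sP by (intro has_D_ln_abs[OF diffble_has_D nz]) (simp add: ser_diffble_def)
  have sL: "ser_diffble (log1p_ser (logQ N P))"
    by (rule ser_diffble_log1p_ser[OF ser_bounded_logQ ser_diffble_logQ[OF sP nz]])
  show "ser_diffble (logP_ser N P)"
    unfolding logP_ser_eq using sL has_D_diffble[OF hl] by simp
  show "ser_D (logP_ser N P) = ser_add (ser_const (\<lambda>s x t. D (P (int N)) s x t / P (int N) s x t))
                                        (ser_D (log1p_ser (logQ N P)))"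
    unfolding logP_ser_eq using sL has_D_diffble[OF hl]
      by (simp add: ser_D_add ser_D_const has_D_imp_D[OF hl])
qed

lemma ser_mult_ser_D_logP:
  assumes P: "ser_deg_le P (int N)" and nz: "\<And>s x t. P (int N) s x t \<noteq> 0" and sP: "ser_diffble P"
  shows "ser_mult P (ser_D (logP_ser N P)) = ser_D P"
proof (rule ser_eqI)
  define Q where "Q = logQ N P"
  define p0 where "p0 = P (int N)"
  have Pd: "P = ser_mult (ser_smul p0 (ser_monom (int N))) (ser_add ser_one Q)"
    unfolding Q_def p0_def by (rule ser_eq_lead_mult_one_plus_logQ[OF P nz])
  have bQ: "ser_bounded Q" and sQ: "ser_diffble Q"
    unfolding Q_def by (simp, rule ser_diffble_logQ[OF sP nz])
  have bL: "ser_bounded (log1p_ser Q)" by (rule ser_boundedI[OF ser_deg_le_log1p_ser])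
  have dp: "diffble p0" using sP unfolding p0_def ser_diffble_def by blast
  have log1p: "ser_mult (ser_add ser_one Q) (ser_D (log1p_ser Q)) = ser_D Q"
    unfolding Q_def by (rule sder.one_plus_mult_Der_log1p[OF ser_deg_le_logQ ser_diffble_logQ[OF sP nz]])
  show "ser_bounded (ser_mult P (ser_D (logP_ser N P)))" "ser_bounded (ser_D P)"
    using ser_boundedI[OF P] by simp_all
  fix s x t
  have log1p': "(1 + ser_fls Q s x t) * ser_fls (ser_D (log1p_ser Q)) s x t = ser_fls (ser_D Q) s x t"
    using arg_cong[OF log1p, of "\<lambda>a. ser_fls a s x t"] bQ bL by simp
  have p0: "fls_const (p0 s x t) * fls_const (D p0 s x t / p0 s x t) = fls_const (D p0 s x t)"
    using nz[of s x t] by (simp add: p0_def)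
  define kN where "kN = ser_fls (ser_monom (int N)) s x t"
  have "ser_fls (ser_mult P (ser_D (logP_ser N P))) s x t
      = fls_const (p0 s x t) * kN * (1 + ser_fls Q s x t) *
        (fls_const (D p0 s x t / p0 s x t) + ser_fls (ser_D (log1p_ser Q)) s x t)"
    unfolding ser_D_logP[OF nz sP] p0_def[symmetric] Q_def[symmetric] kN_def
    by (subst Pd) (use bQ bL in simp)
  also have "\<dots> = (fls_const (p0 s x t) * fls_const (D p0 s x t / p0 s x t)) * kN * (1 + ser_fls Q s x t)
      + fls_const (p0 s x t) * kN * ((1 + ser_fls Q s x t) * ser_fls (ser_D (log1p_ser Q)) s x t)"
    by (simp add: algebra_simps del: fls_const_mult_const)
  also have "\<dots> = ser_fls (ser_D P) s x t"
    unfolding p0 log1p' unfolding kN_def by (subst Pd) (use bQ sQ dp in \<open>simp add: ser_D_mult ser_D_smul ser_D_monom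
        ser_D_add ser_D_one algebra_simps\<close>)
  finally show "ser_fls (ser_mult P (ser_D (logP_ser N P))) s x t = ser_fls (ser_D P) s x t" .
qed

end

section \<open>The normalized shift of \<open>P\<close>\<close>

definition normalized_shift :: "nat \<Rightarrow> ser \<Rightarrow> cf \<Rightarrow> ser" where
  "normalized_shift N P u = ser_smul (\<lambda>s x t. 1 / P (int N) s x t) (ser_shift P u)"

lemma ser_deg_le_normalized_shift: "ser_deg_le P (int N) \<Longrightarrow> ser_deg_le (normalized_shift N P u) (int N)"
  unfolding normalized_shift_def by (intro ser_deg_le_smul ser_deg_le_shift)

lemma normalized_shift_lead:
  assumes P: "ser_deg_le P (int N)" and nz: "\<And>s x t. P (int N) s x t \<noteq> 0"
  shows "normalized_shift N P u (int N) s x t = 1"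
  using nz[of s x t] by (simp add: normalized_shift_def ser_smul_def ser_shift_eq_sum[OF P] shift_coeff_def)

lemma ser_mult_shift_dk_logP:
  assumes P: "ser_deg_le P (int N)" and nz: "\<And>s x t. P (int N) s x t \<noteq> 0"
  shows "ser_mult (ser_shift P u) (ser_shift (dk_logP N P) u) = ser_dk (ser_shift P u)"
  using ser_shift_mult[OF ser_boundedI[OF P] ser_bounded_dk_logP[of N P], where u=u]
    ser_mult_dk_logP[OF P nz] ser_shift_dk[OF ser_boundedI[OF P], where u=u] by simp

lemma dk_logP_normalized_shift:
  assumes P: "ser_deg_le P (int N)" and nz: "\<And>s x t. P (int N) s x t \<noteq> 0"
  shows "dk_logP N (normalized_shift N P u) = ser_shift (dk_logP N P) u"
proof (rule ser_mult_left_cancel[OF ser_deg_le_normalized_shift[OF P]])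
  show "\<And>s x t. normalized_shift N P u (int N) s x t \<noteq> 0" using normalized_shift_lead[OF P nz] by simp
  show "ser_bounded (dk_logP N (normalized_shift N P u))" "ser_bounded (ser_shift (dk_logP N P) u)"
    by simp_all
  have "ser_mult (normalized_shift N P u) (ser_shift (dk_logP N P) u) = ser_dk (normalized_shift N P u)"
    unfolding normalized_shift_def using ser_boundedI[OF P]
    by (simp add: ser_mult_smul_left ser_mult_shift_dk_logP[OF P nz] ser_dk_smul)
  moreover have "ser_mult (normalized_shift N P u) (dk_logP N (normalized_shift N P u))
      = ser_dk (normalized_shift N P u)"
    by (rule ser_mult_dk_logP[OF ser_deg_le_normalized_shift[OF P]])
      (simp add: normalized_shift_lead[OF P nz])
  ultimately show "ser_mult (normalized_shift N P u) (dk_logP N (normalized_shift N P u))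
      = ser_mult (normalized_shift N P u) (ser_shift (dk_logP N P) u)"
    by simp
qed

context coord_deriv begin

lemma has_D_inverse_lead:
  "ser_diffble P \<Longrightarrow> (\<And>s x t. P (int N) s x t \<noteq> 0) \<Longrightarrow>
    has_D (\<lambda>s x t. 1 / P (int N) s x t) (\<lambda>s x t. - D (P (int N)) s x t / (P (int N) s x t)\<^sup>2)"
  by (rule has_D_inverse[OF diffble_has_D]) (simp_all add: ser_diffble_def)

lemma
  assumes P: "ser_deg_le P (int N)" and nz: "\<And>s x t. P (int N) s x t \<noteq> 0"
    and sP: "ser_diffble P" and du: "diffble u"
  shows ser_diffble_normalized_shift: "ser_diffble (normalized_shift N P u)"
    and ser_D_normalized_shift: "ser_D (normalized_shift N P u) =
      ser_add (ser_smul (\<lambda>s x t. - D (P (int N)) s x t / (P (int N) s x t)\<^sup>2) (ser_shift P u))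
        (ser_smul (\<lambda>s x t. 1 / P (int N) s x t)
          (ser_diff (ser_shift (ser_D P) u) (ser_smul (D u) (ser_dk (ser_shift P u)))))"
  using has_D_diffble[OF has_D_inverse_lead[OF sP nz]] sP du ser_boundedI[OF P]
  by (simp_all add: normalized_shift_def ser_D_smul ser_D_shift
      has_D_imp_D[OF has_D_inverse_lead[OF sP nz]])

lemma ser_D_logP_normalized_shift:
  assumes P: "ser_deg_le P (int N)" and nz: "\<And>s x t. P (int N) s x t \<noteq> 0"
    and sP: "ser_diffble P" and du: "diffble u"
  shows "ser_D (logP_ser N (normalized_shift N P u)) =
    ser_diff (ser_diff (ser_shift (ser_D (logP_ser N P)) u) (ser_smul (D u) (ser_shift (dk_logP N P) u)))
      (ser_const (\<lambda>s x t. D (P (int N)) s x t / P (int N) s x t))"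
    (is "_ = ?R")
proof (rule ser_mult_left_cancel[OF ser_deg_le_normalized_shift[OF P]])
  have bP: "ser_bounded P" by (rule ser_boundedI[OF P])
  show "\<And>s x t. normalized_shift N P u (int N) s x t \<noteq> 0" using normalized_shift_lead[OF P nz] by simp
  show "ser_bounded (ser_D (logP_ser N (normalized_shift N P u)))" "ser_bounded ?R" by simp_all
  have shift_log: "ser_mult (ser_shift P u) (ser_shift (ser_D (logP_ser N P)) u) = ser_shift (ser_D P) u"
    using ser_shift_mult[OF bP ser_bounded_ser_D[OF ser_bounded_logP[of N P]], where u=u]
      ser_mult_ser_D_logP[OF P nz sP] by simp
  have "ser_mult (normalized_shift N P u) ?R = ser_D (normalized_shift N P u)"
  proof (rule ser_eqI)
    show "ser_bounded (ser_mult (normalized_shift N P u) ?R)"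
      and "ser_bounded (ser_D (normalized_shift N P u))"
      using bP by (simp_all add: normalized_shift_def)
    fix s x t
    define p0 where "p0 = P (int N) s x t"
    define dp0 where "dp0 = D (P (int N)) s x t"
    define Pu where "Pu = ser_fls (ser_shift P u) s x t"
    define A where "A = ser_fls (ser_shift (ser_D (logP_ser N P)) u) s x t"
    define B where "B = ser_fls (ser_shift (dk_logP N P) u) s x t"
    have PuA: "Pu * A = ser_fls (ser_shift (ser_D P) u) s x t"
      unfolding Pu_def A_def using arg_cong[OF shift_log, of "\<lambda>a. ser_fls a s x t"] bP by simp
    have PuB: "Pu * B = ser_fls (ser_dk (ser_shift P u)) s x t"
      unfolding Pu_def B_def using arg_cong[OF ser_mult_shift_dk_logP[OF P nz], of "\<lambda>a. ser_fls a s x t"] bP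
      by (simp del: ser_fls_dk)
    have p0: "fls_const (1 / p0) * fls_const (dp0 / p0) = - fls_const (- dp0 / p0\<^sup>2)"
      using nz[of s x t] by (simp add: p0_def power2_eq_square)
    have "ser_fls (ser_mult (normalized_shift N P u) ?R) s x t
        = fls_const (1 / p0) * Pu * (A - fls_const (D u s x t) * B - fls_const (dp0 / p0))"
      unfolding normalized_shift_def Pu_def A_def B_def p0_def dp0_def using bP by simp
    also have "\<dots> = fls_const (1 / p0) * (Pu * A) - fls_const (1 / p0) * fls_const (D u s x t) * (Pu * B)
        - (fls_const (1 / p0) * fls_const (dp0 / p0)) * Pu"
      by (simp add: algebra_simps)
    also have "\<dots> = ser_fls (ser_D (normalized_shift N P u)) s x t"
      unfolding PuA PuB p0 ser_D_normalized_shift[OF P nz sP du] using bP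
      by (simp add: Pu_def p0_def dp0_def algebra_simps del: ser_fls_dk)
    finally show "ser_fls (ser_mult (normalized_shift N P u) ?R) s x t
        = ser_fls (ser_D (normalized_shift N P u)) s x t" .
  qed
  then show "ser_mult (normalized_shift N P u) (ser_D (logP_ser N (normalized_shift N P u)))
      = ser_mult (normalized_shift N P u) ?R"
    using ser_mult_ser_D_logP[OF ser_deg_le_normalized_shift[OF P] _
        ser_diffble_normalized_shift[OF P nz sP du]] normalized_shift_lead[OF P nz]
    by simp
qed

end

section \<open>The derivatives in \<open>x\<close>, \<open>s\<close> and \<open>t\<^sub>n\<close>\<close>

interpretation dX: coord_deriv "\<lambda>s x t y. (s, y, t)" "\<lambda>s x t. x"
  by unfold_locales simp
interpretation dS: coord_deriv "\<lambda>s x t y. (y, x, t)" "\<lambda>s x t. s"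
  by unfold_locales simp
interpretation dT: coord_deriv "\<lambda>s x t y. (s, x, t(n := y))" "\<lambda>s x t. t n" for n :: nat
  by unfold_locales simp

lemma ser_dx_eq: "ser_dx a = dX.ser_D a"
  by (intro ext) (simp add: ser_dx_def dX.ser_D_def pd_x_def dX.D_def cf_at_def)
lemma ser_ds_eq: "ser_ds a = dS.ser_D a"
  by (intro ext) (simp add: ser_ds_def dS.ser_D_def pd_s_def dS.D_def cf_at_def)
lemma ser_dt_eq: "ser_dt n a = dT.ser_D n a"
  by (intro ext) (simp add: ser_dt_def dT.ser_D_def pd_t_def dT.D_def cf_at_def)

lemma cf_diff_iff: "cf_diff f \<longleftrightarrow> dX.diffble f \<and> dS.diffble f \<and> (\<forall>n\<ge>1. dT.diffble n f)"
  by (simp add: cf_diff_def dX.diffble_def dS.diffble_def dT.diffble_def cf_at_def) blast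

lemma ser_diffble_if_cf_diff:
  "(\<And>n. cf_diff (a n)) \<Longrightarrow> dX.ser_diffble a \<and> dS.ser_diffble a \<and> (\<forall>n\<ge>1. dT.ser_diffble n a)"
  by (simp add: dX.ser_diffble_def dS.ser_diffble_def dT.ser_diffble_def cf_diff_iff)

lemma cf_diff_if_ser_diffble:
  "dX.ser_diffble a \<Longrightarrow> dS.ser_diffble a \<Longrightarrow> (\<And>n. n \<ge> 1 \<Longrightarrow> dT.ser_diffble n a) \<Longrightarrow> cf_diff (a m)"
  by (simp add: dX.ser_diffble_def dS.ser_diffble_def dT.ser_diffble_def cf_diff_iff)

section \<open>Poisson brackets\<close>

lemma ser_bounded_pb [simp]: "ser_bounded f \<Longrightarrow> ser_bounded g \<Longrightarrow> ser_bounded (pb f g)"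
  by (simp add: pb_def ser_dx_eq)
lemma ser_bounded_pb_log [simp]: "ser_bounded g \<Longrightarrow> ser_bounded (pb_log N Q g)"
  by (simp add: pb_log_def ser_dx_eq)

lemma pb_shift:
  assumes "ser_bounded f" "ser_bounded g" "dX.ser_diffble f" "dX.ser_diffble g" "dX.diffble u"
  shows "pb (ser_shift f u) (ser_shift g u) = ser_shift (pb f g) u"
  unfolding pb_def ser_dx_eq using assms
  by (intro ser_eqI) (simp_all add: dX.ser_D_shift algebra_simps del: ser_fls_dk)

lemma pb_log_shift:
  assumes P: "ser_deg_le P (int N)" and nz: "\<And>s x t. P (int N) s x t \<noteq> 0"
    and sP: "dX.ser_diffble P" and du: "dX.diffble u" and g: "ser_bounded g" "dX.ser_diffble g"
  shows "pb_log N (normalized_shift N P u) (ser_shift g u) =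
    ser_add (ser_shift (pb_log N P g) u)
      (ser_smul (\<lambda>s x t. dX.D (P (int N)) s x t / P (int N) s x t) (ser_dk (ser_shift g u)))"
  unfolding pb_log_def ser_dx_eq dk_logP_normalized_shift[OF P nz]
    dX.ser_D_logP_normalized_shift[OF P nz sP du] dX.ser_D_shift[OF du g]
  using g by (intro ser_eqI) (simp_all add: algebra_simps del: ser_fls_dk)

lemma pb_add_const:
  assumes "ser_bounded A" "ser_bounded g" "dX.ser_diffble A" "dX.diffble c"
  shows "pb (ser_add A (ser_const c)) g = ser_diff (pb A g) (ser_smul (dX.D c) (ser_dk g))"
  unfolding pb_def ser_dx_eq using assms
  by (intro ser_eqI) (simp_all add: ser_dk_add ser_dk_const dX.ser_D_add dX.ser_D_const
      algebra_simps del: ser_fls_dk)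

lemma pb_log_add_const:
  assumes "ser_bounded A" "dX.ser_diffble A" "dX.diffble c"
  shows "pb_log N Q (ser_add A (ser_const c)) = ser_add (pb_log N Q A) (ser_smul (dX.D c) (dk_logP N Q))"
  unfolding pb_log_def ser_dx_eq using assms
  by (intro ser_eqI) (simp_all add: ser_dk_add ser_dk_const dX.ser_D_add dX.ser_D_const
      algebra_simps del: ser_fls_dk)

lemma ser_mult_coeff0_eq_0: "ser_deg_le Y a \<Longrightarrow> ser_deg_le Z b \<Longrightarrow> a + b < 0 \<Longrightarrow> ser_mult Y Z 0 s x t = 0"
  using ser_deg_le_mult[of Y a Z b] by (auto simp: ser_deg_le_def)

lemma ser_mult_dx_coeff0:
  assumes Y: "ser_deg_le Y (-1)" and L: "ser_deg_le L 1" "\<And>s x t. L 1 s x t = 1"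
  shows "ser_mult Y (ser_dx L) 0 s x t = 0"
proof -
  have "L 1 = (\<lambda>s x t. 1)" using L(2) by (intro ext) simp
  then have z: "ser_dx L 1 = (\<lambda>s x t. 0)" by (simp add: ser_dx_eq dX.ser_D_def dX.D_const)
  have u: "ser_deg_le (ser_dx L) 1" by (simp add: ser_dx_eq dX.ser_deg_le_ser_D[OF L(1)])
  show ?thesis by (subst ser_mult_eq_sum[OF Y u]) (simp add: z)
qed

lemma ser_mult_dk_coeff0:
  assumes X: "ser_deg_le X 0" and L: "ser_deg_le L 1" "\<And>s x t. L 1 s x t = 1"
  shows "ser_mult X (ser_dk L) 0 s x t = X 0 s x t"
proof -
  have u: "ser_deg_le (ser_dk L) 0" using ser_deg_le_dk[OF L(1)] by simp
  show ?thesis by (subst ser_mult_eq_sum[OF X u]) (simp add: ser_dk_def L(2))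
qed

lemma pb_coeff0:
  assumes M: "ser_deg_le M 0" and L: "ser_deg_le L 1" "\<And>s x t. L 1 s x t = 1"
  shows "pb M L 0 s x t = - ser_dx M 0 s x t"
proof -
  have "ser_mult (ser_dk M) (ser_dx L) 0 s x t = 0" using ser_deg_le_dk[OF M]
    by (intro ser_mult_dx_coeff0[OF _ L]) simp
  moreover have "ser_mult (ser_dx M) (ser_dk L) 0 s x t = ser_dx M 0 s x t"
    by (rule ser_mult_dk_coeff0[OF _ L]) (simp add: ser_dx_eq dX.ser_deg_le_ser_D[OF M])
  ultimately show ?thesis by (simp add: pb_def ser_diff_def)
qed

lemma pb_log_coeff0_nonpos:
  assumes M: "ser_deg_le M 0"
  shows "pb_log N Q M 0 s x t = 0"
proof -
  have "ser_mult (dk_logP N Q) (ser_dx M) 0 s x t = 0"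
    by (rule ser_mult_coeff0_eq_0[OF ser_deg_le_dk_logP]) (auto simp: ser_dx_eq intro:
        dX.ser_deg_le_ser_D[OF M])
  moreover have "ser_mult (ser_dx (logP_ser N Q)) (ser_dk M) 0 s x t = 0"
    by (rule ser_mult_coeff0_eq_0[OF _ ser_deg_le_dk[OF M]]) (auto simp: ser_dx_eq intro:
        dX.ser_deg_le_ser_D[OF ser_deg_le_logP])
  ultimately show ?thesis by (simp add: pb_log_def ser_diff_def)
qed

lemma pb_log_coeff0:
  assumes L: "ser_deg_le L 1" "\<And>s x t. L 1 s x t = 1"
  shows "pb_log N Q L 0 s x t = - ser_dx (logP_ser N Q) 0 s x t"
proof -
  have "ser_mult (dk_logP N Q) (ser_dx L) 0 s x t = 0"
    by (rule ser_mult_dx_coeff0[OF ser_deg_le_dk_logP L])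
  moreover have "ser_mult (ser_dx (logP_ser N Q)) (ser_dk L) 0 s x t = ser_dx (logP_ser N Q) 0 s x t"
    by (rule ser_mult_dk_coeff0[OF _ L]) (simp add: ser_dx_eq dX.ser_deg_le_ser_D[OF ser_deg_le_logP])
  ultimately show ?thesis by (simp add: pb_log_def ser_diff_def)
qed

lemma pb_pow_self:
  assumes "ser_bounded L" "dX.ser_diffble L"
  shows "pb (ser_pow L (Suc m)) L = ser_const (\<lambda>s x t. 0)"
proof (rule ser_eqI)
  show "ser_bounded (pb (ser_pow L (Suc m)) L)" using assms
    by (simp add: pb_def ser_dx_eq del: ser_pow.simps)
  show "ser_bounded (ser_const (\<lambda>s x t. 0))" by simp
  fix s x t
  show "ser_fls (pb (ser_pow L (Suc m)) L) s x t = ser_fls (ser_const (\<lambda>s x t. 0)) s x t"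
    using assms unfolding pb_def ser_dx_eq
    by (simp add: dk.ser_fls_Der_pow dX.sder.ser_fls_Der_pow del: ser_pow.simps ser_fls_dk)
qed

lemma pb_log_pow:
  assumes "ser_bounded L" "dX.ser_diffble L" "dS.ser_diffble L" and hyp: "ser_ds L = pb_log N P L"
  shows "pb_log N P (ser_pow L (Suc m)) = ser_ds (ser_pow L (Suc m))"
proof (rule ser_eqI)
  show "ser_bounded (pb_log N P (ser_pow L (Suc m)))" using assms
    by (simp add: pb_log_def ser_dx_eq del: ser_pow.simps)
  show "ser_bounded (ser_ds (ser_pow L (Suc m)))" using assms by (simp add: ser_ds_eq del: ser_pow.simps)
  fix s x t
  have h: "ser_fls (dS.ser_D L) s x t
      = ser_fls (dk_logP N P) s x t * ser_fls (dX.ser_D L) s x t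
        - ser_fls (dX.ser_D (logP_ser N P)) s x t * ser_fls (ser_dk L) s x t"
    using arg_cong[OF hyp, of "\<lambda>a. ser_fls a s x t"] assms
    by (simp add: pb_log_def ser_dx_eq ser_ds_eq del: ser_fls_dk)
  show "ser_fls (pb_log N P (ser_pow L (Suc m))) s x t = ser_fls (ser_ds (ser_pow L (Suc m))) s x t"
    using assms unfolding pb_log_def ser_dx_eq ser_ds_eq
    by (simp add: dk.ser_fls_Der_pow dX.sder.ser_fls_Der_pow dS.sder.ser_fls_Der_pow h
        algebra_simps del: ser_pow.simps ser_fls_dk)
qed

lemma pb_diff_left:
  assumes "ser_bounded a" "ser_bounded b" "ser_bounded g" "dX.ser_diffble a" "dX.ser_diffble b"
  shows "pb (ser_diff a b) g = ser_diff (pb a g) (pb b g)"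
  unfolding pb_def ser_dx_eq using assms
  by (intro ser_eqI) (simp_all add: ser_dk_diff dX.ser_D_diff algebra_simps del: ser_fls_dk)

lemma pb_log_diff:
  assumes "ser_bounded a" "ser_bounded b" "dX.ser_diffble a" "dX.ser_diffble b"
  shows "pb_log N Q (ser_diff a b) = ser_diff (pb_log N Q a) (pb_log N Q b)"
  unfolding pb_log_def ser_dx_eq using assms
  by (intro ser_eqI) (simp_all add: ser_dk_diff dX.ser_D_diff algebra_simps del: ser_fls_dk)

section \<open>Solutions of the dcmKP hierarchy\<close>

locale dcmKP_solution =
  fixes N :: nat and L P :: ser
  assumes dc: "dcmKP N L P"
begin

abbreviation u1 :: cf where "u1 \<equiv> L 0"
abbreviation L_dmKP :: ser where "L_dmKP \<equiv> ser_shift L u1"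
abbreviation P_dmKP :: ser where "P_dmKP \<equiv> normalized_shift N P u1"

lemma deg_L: "ser_deg_le L 1"
  using dc unfolding dcmKP_def ser_deg_le_def by (auto simp: cf0_def)
lemma deg_P: "ser_deg_le P (int N)"
  using dc unfolding dcmKP_def ser_deg_le_def by (auto simp: cf0_def)
lemma L_lead: "L 1 s x t = 1" using dc unfolding dcmKP_def by auto
lemma P_lead_nonzero: "P (int N) s x t \<noteq> 0" using dc unfolding dcmKP_def by auto
lemma P_low: "n < 1 \<Longrightarrow> P n s x t = 0" using dc unfolding dcmKP_def by (auto simp: cf0_def)
lemma bounded_L [simp]: "ser_bounded L" by (rule ser_boundedI[OF deg_L])
lemma bounded_P [simp]: "ser_bounded P" by (rule ser_boundedI[OF deg_P])
lemma cf_diff_L: "cf_diff (L n)" using dc unfolding dcmKP_def by auto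
lemma cf_diff_P: "cf_diff (P n)" using dc unfolding dcmKP_def by auto
lemma dX_L [simp]: "dX.ser_diffble L" using ser_diffble_if_cf_diff[of L] cf_diff_L by blast
lemma dS_L [simp]: "dS.ser_diffble L" using ser_diffble_if_cf_diff[of L] cf_diff_L by blast
lemma dT_L: "1 \<le> n \<Longrightarrow> dT.ser_diffble n L" using ser_diffble_if_cf_diff[of L] cf_diff_L by blast
lemma dX_P [simp]: "dX.ser_diffble P" using ser_diffble_if_cf_diff[of P] cf_diff_P by blast
lemma dS_P [simp]: "dS.ser_diffble P" using ser_diffble_if_cf_diff[of P] cf_diff_P by blast
lemma dT_P: "1 \<le> n \<Longrightarrow> dT.ser_diffble n P" using ser_diffble_if_cf_diff[of P] cf_diff_P by blast
lemma dX_u1 [simp]: "dX.diffble u1" using dX_L by (simp add: dX.ser_diffble_def)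
lemma dS_u1 [simp]: "dS.diffble u1" using dS_L by (simp add: dS.ser_diffble_def)
lemma dT_u1: "1 \<le> n \<Longrightarrow> dT.diffble n u1" using dT_L by (simp add: dT.ser_diffble_def)
lemma Lax_t: "1 \<le> n \<Longrightarrow> ser_dt n L = pb (proj_pos (ser_pow L n)) L"
  using dc unfolding dcmKP_def hier_eqs_def by auto
lemma Lax_s: "ser_ds L = pb_log N P L"
  using dc unfolding dcmKP_def hier_eqs_def by auto
lemma log_t:
  "1 \<le> n \<Longrightarrow> ser_dt n (logP_ser N P) = ser_diff (ser_ds (proj_pos (ser_pow L n))) (pb_log N P (proj_pos (ser_pow L n)))"
  using dc unfolding dcmKP_def hier_eqs_def by auto

definition Bn :: "nat \<Rightarrow> ser" where "Bn n = proj_pos (ser_pow L n)"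
definition Mn :: "nat \<Rightarrow> ser" where "Mn n = ser_diff (ser_pow L n) (Bn n)"
definition cn :: "nat \<Rightarrow> cf" where "cn n = ser_pow L n 0"

lemma deg_Ln: "ser_deg_le (ser_pow L n) (int n)" using ser_deg_le_pow[OF deg_L, of n] by simp
lemma deg_Bn: "ser_deg_le (Bn n) (int n)" using deg_Ln
  by (auto simp: ser_deg_le_def Bn_def proj_pos_def cf0_def)
lemma bounded_Bn [simp]: "ser_bounded (Bn n)" by (rule ser_boundedI[OF deg_Bn])
lemma deg_Mn: "ser_deg_le (Mn n) 0"
  by (auto simp: ser_deg_le_def Mn_def Bn_def proj_pos_def ser_diff_def)
lemma bounded_Mn [simp]: "ser_bounded (Mn n)" by (rule ser_boundedI[OF deg_Mn])
lemma Mn0: "Mn n 0 = cn n"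
  by (intro ext) (simp add: Mn_def Bn_def proj_pos_def ser_diff_def cn_def cf0_def)
lemma Bn_eq: "Bn n = ser_diff (ser_pow L n) (Mn n)"
  by (intro ext) (simp add: Mn_def ser_diff_def)

lemma dX_Bn [simp]: "dX.ser_diffble (Bn n)" unfolding Bn_def
  by (intro dX.ser_diffble_proj_pos dX.ser_diffble_pow) simp_all
lemma dS_Bn [simp]: "dS.ser_diffble (Bn n)" unfolding Bn_def
  by (intro dS.ser_diffble_proj_pos dS.ser_diffble_pow) simp_all
lemma dX_Mn [simp]: "dX.ser_diffble (Mn n)" unfolding Mn_def
  by (intro dX.ser_diffble_diff dX.ser_diffble_pow) simp_all
lemma dS_Mn [simp]: "dS.ser_diffble (Mn n)" unfolding Mn_def
  by (intro dS.ser_diffble_diff dS.ser_diffble_pow) simp_all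
lemma dX_cn [simp]: "dX.diffble (cn n)" using dX.ser_diffble_pow[OF bounded_L dX_L, of n]
  by (simp add: dX.ser_diffble_def cn_def)
lemma dS_cn [simp]: "dS.diffble (cn n)" using dS.ser_diffble_pow[OF bounded_L dS_L, of n]
  by (simp add: dS.ser_diffble_def cn_def)

lemma proj_nonneg_L_dmKP_pow:
  "proj_nonneg (ser_pow L_dmKP n) = ser_add (ser_shift (Bn n) u1) (ser_const (cn n))"
  using proj_nonneg_shift[OF deg_Ln[of n], where u=u1] ser_shift_pow[OF bounded_L, where n=n and u=u1]
  by (simp add: Bn_def cn_def)

lemma dT_u1_eq_dX_cn:
  assumes n: "1 \<le> n"
  shows "dT.D n u1 = dX.D (cn n)"
proof (intro ext)
  fix s x t
  obtain m where m: "n = Suc m" using n by (cases n) auto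
  have "ser_dt n L 0 s x t = pb (Bn n) L 0 s x t" using Lax_t[OF n] by (simp add: Bn_def)
  moreover have "ser_dt n L 0 s x t = dT.D n u1 s x t" by (simp add: ser_dt_eq dT.ser_D_def)
  moreover have "pb (Bn n) L = ser_diff (pb (ser_pow L n) L) (pb (Mn n) L)"
    unfolding Bn_eq[of n] by (rule pb_diff_left) simp_all
  moreover have "pb (ser_pow L n) L = ser_const (\<lambda>s x t. 0)" unfolding m by (rule pb_pow_self) simp_all
  moreover have "pb (Mn n) L 0 s x t = - ser_dx (Mn n) 0 s x t"
    by (rule pb_coeff0[OF deg_Mn deg_L L_lead])
  moreover have "ser_dx (Mn n) 0 s x t = dX.D (cn n) s x t" by (simp add: ser_dx_eq dX.ser_D_def Mn0)
  ultimately show "dT.D n u1 s x t = dX.D (cn n) s x t" by (simp add: ser_diff_def ser_const_def)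
qed

lemma dS_u1_eq: "dS.D u1 = (\<lambda>s x t. - (dX.D (P (int N)) s x t / P (int N) s x t))"
proof (intro ext)
  fix s x t
  have hl: "dX.has_D (\<lambda>s x t. ln \<bar>P (int N) s x t\<bar>)
      (\<lambda>s x t. dX.D (P (int N)) s x t / P (int N) s x t)"
    by (rule dX.has_D_ln_abs[OF dX.diffble_has_D P_lead_nonzero])
      (use dX_P in \<open>simp add: dX.ser_diffble_def\<close>)
  have "ser_ds L 0 s x t = pb_log N P L 0 s x t" using Lax_s by simp
  moreover have "ser_ds L 0 s x t = dS.D u1 s x t" by (simp add: ser_ds_eq dS.ser_D_def)
  moreover have "pb_log N P L 0 s x t = - ser_dx (logP_ser N P) 0 s x t"
    by (rule pb_log_coeff0[OF deg_L L_lead])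
  moreover have "logP_ser N P 0 = (\<lambda>s x t. ln \<bar>P (int N) s x t\<bar>)" by (intro ext) (simp add: logP_ser_def)
  ultimately show "dS.D u1 s x t = - (dX.D (P (int N)) s x t / P (int N) s x t)"
    by (simp add: ser_dx_eq dX.ser_D_def dX.has_D_imp_D[OF hl])
qed

lemma dS_cn_eq:
  assumes n: "1 \<le> n"
  shows "dS.D (cn n) = (\<lambda>s x t. - (dT.D n (P (int N)) s x t / P (int N) s x t))"
proof (intro ext)
  fix s x t
  obtain m where m: "n = Suc m" using n by (cases n) auto
  have hl: "dT.has_D n (\<lambda>s x t. ln \<bar>P (int N) s x t\<bar>)
      (\<lambda>s x t. dT.D n (P (int N)) s x t / P (int N) s x t)"
    by (rule dT.has_D_ln_abs[OF dT.diffble_has_D P_lead_nonzero])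
      (use dT_P[OF n] in \<open>simp add: dT.ser_diffble_def\<close>)
  have lp0: "logP_ser N P 0 = (\<lambda>s x t. ln \<bar>P (int N) s x t\<bar>)" by (intro ext) (simp add: logP_ser_def)
  have "ser_dt n (logP_ser N P) 0 s x t = ser_diff (ser_ds (Bn n)) (pb_log N P (Bn n)) 0 s x t"
    using log_t[OF n] by (simp add: Bn_def)
  moreover have "ser_dt n (logP_ser N P) 0 s x t = dT.D n (P (int N)) s x t / P (int N) s x t"
    by (simp add: ser_dt_eq dT.ser_D_def lp0 dT.has_D_imp_D[OF hl])
  moreover have "ser_ds (Bn n) 0 s x t = 0"
  proof -
    have "Bn n 0 = (\<lambda>s x t. 0)" by (simp add: Bn_def proj_pos_def cf0_def)
    thus ?thesis by (simp add: ser_ds_eq dS.ser_D_def dS.D_const)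
  qed
  moreover have "pb_log N P (Bn n) = ser_diff (pb_log N P (ser_pow L n)) (pb_log N P (Mn n))"
    unfolding Bn_eq[of n] by (rule pb_log_diff) simp_all
  moreover have "pb_log N P (ser_pow L n) = ser_ds (ser_pow L n)" unfolding m
    by (rule pb_log_pow) (simp_all add: Lax_s)
  moreover have "pb_log N P (Mn n) 0 s x t = 0" by (rule pb_log_coeff0_nonpos[OF deg_Mn])
  moreover have "ser_ds (ser_pow L n) 0 s x t = dS.D (cn n) s x t"
    by (simp add: ser_ds_eq dS.ser_D_def cn_def)
  ultimately show "dS.D (cn n) s x t = - (dT.D n (P (int N)) s x t / P (int N) s x t)"
    by (simp add: ser_diff_def)
qed

lemma L_dmKP_coeff_1: "L_dmKP 1 s x t = 1"
  by (simp add: ser_shift_eq_sum[OF deg_L] shift_coeff_def L_lead)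

lemma L_dmKP_coeff_0: "L_dmKP 0 = cf0"
proof (intro ext)
  fix s x t
  have e: "{0..1::int} = {0,1}" by auto
  show "L_dmKP 0 s x t = cf0 s x t"
    by (simp add: ser_shift_eq_sum[OF deg_L] e shift_coeff_def L_lead cf0_def)
qed

lemma L_dmKP_coeff_gt_1: "1 < n \<Longrightarrow> L_dmKP n = cf0"
  using ser_deg_le_shift[OF deg_L, of u1] by (intro ext) (simp add: ser_deg_le_def cf0_def)

lemma P_dmKP_lead: "P_dmKP (int N) s x t = 1"
  by (rule normalized_shift_lead[OF deg_P P_lead_nonzero])

lemma P_dmKP_coeff_outside: "n < 0 \<or> n > int N \<Longrightarrow> P_dmKP n = cf0"
proof (intro ext)
  fix s x t
  assume n: "n < 0 \<or> n > int N"
  show "P_dmKP n s x t = cf0 s x t"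
  proof (cases "n < 0")
    case True
    have "(\<Sum>k\<in>{n..int N}. P k s x t * shift_coeff (- u1 s x t) k (k - n)) = 0"
    proof (intro sum.neutral ballI)
      fix k assume k: "k \<in> {n..int N}"
      show "P k s x t * shift_coeff (- u1 s x t) k (k - n) = 0"
      proof (cases "k < 1")
        case True thus ?thesis by (simp add: P_low)
      next
        case False
        hence "(of_int k gchoose nat (k - n) :: real) = 0" using \<open>n < 0\<close>
          by (intro gbinomial_of_int_eq_0) auto
        thus ?thesis by (simp add: shift_coeff_def)
      qed
    qed
    thus ?thesis by (simp add: normalized_shift_def ser_smul_def ser_shift_eq_sum[OF deg_P] cf0_def)
  next
    case False
    hence "n > int N" using n by simp
    thus ?thesis using ser_deg_le_normalized_shift[OF deg_P, of u1]
      by (simp add: ser_deg_le_def cf0_def)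
  qed
qed

lemma cf_diff_L_dmKP: "cf_diff (L_dmKP n)"
proof (rule cf_diff_if_ser_diffble)
  fix k :: nat assume k: "1 \<le> k"
  show "dT.ser_diffble k L_dmKP"
    using dT.ser_diffble_shift[OF dT_u1[OF k] bounded_L dT_L[OF k]] .
qed simp_all

lemma cf_diff_P_dmKP: "cf_diff (P_dmKP n)"
  by (rule cf_diff_if_ser_diffble) (auto intro!: dX.ser_diffble_normalized_shift
      dS.ser_diffble_normalized_shift dT.ser_diffble_normalized_shift deg_P P_lead_nonzero dT_u1 dT_P)

lemma L_dmKP_Lax_t:
  assumes n: "1 \<le> n"
  shows "ser_dt n L_dmKP = pb (proj_nonneg (ser_pow L_dmKP n)) L_dmKP"
proof -
  have "ser_dt n L_dmKP = ser_diff (ser_shift (pb (Bn n) L) u1) (ser_smul (dT.D n u1) (ser_dk L_dmKP))"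
    unfolding ser_dt_eq dT.ser_D_shift[OF dT_u1[OF n] bounded_L dT_L[OF n]] using Lax_t[OF n]
    by (simp add: ser_dt_eq Bn_def)
  moreover have "pb (proj_nonneg (ser_pow L_dmKP n)) L_dmKP
      = ser_diff (ser_shift (pb (Bn n) L) u1) (ser_smul (dX.D (cn n)) (ser_dk L_dmKP))"
    unfolding proj_nonneg_L_dmKP_pow by (simp add: pb_add_const pb_shift)
  ultimately show ?thesis by (simp add: dT_u1_eq_dX_cn[OF n])
qed

lemma L_dmKP_Lax_s: "ser_ds L_dmKP = pb_log N P_dmKP L_dmKP"
proof -
  have "ser_ds L_dmKP = ser_diff (ser_shift (pb_log N P L) u1) (ser_smul (dS.D u1) (ser_dk L_dmKP))"
    unfolding ser_ds_eq dS.ser_D_shift[OF dS_u1 bounded_L dS_L] using Lax_s by (simp add: ser_ds_eq)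
  moreover have "pb_log N P_dmKP L_dmKP = ser_add (ser_shift (pb_log N P L) u1)
      (ser_smul (\<lambda>s x t. dX.D (P (int N)) s x t / P (int N) s x t) (ser_dk L_dmKP))"
    by (rule pb_log_shift[OF deg_P P_lead_nonzero dX_P dX_u1 bounded_L dX_L])
  ultimately show ?thesis by (simp add: dS_u1_eq) (simp add: ser_diff_def ser_add_def ser_smul_def)
qed

lemma P_dmKP_log_t:
  assumes n: "1 \<le> n"
  shows "ser_dt n (logP_ser N P_dmKP) =
    ser_diff (ser_ds (proj_nonneg (ser_pow L_dmKP n))) (pb_log N P_dmKP (proj_nonneg (ser_pow L_dmKP n)))"
proof -
  have lhs: "ser_dt n (logP_ser N P_dmKP) =
    ser_diff
      (ser_diff (ser_shift (ser_diff (dS.ser_D (Bn n)) (pb_log N P (Bn n))) u1)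
        (ser_smul (dT.D n u1) (ser_shift (dk_logP N P) u1)))
      (ser_const (\<lambda>s x t. dT.D n (P (int N)) s x t / P (int N) s x t))"
    unfolding ser_dt_eq dT.ser_D_logP_normalized_shift[OF deg_P P_lead_nonzero dT_P[OF n] dT_u1[OF n]]
    using log_t[OF n] by (simp add: ser_dt_eq ser_ds_eq Bn_def)
  have rhs: "ser_diff (ser_ds (proj_nonneg (ser_pow L_dmKP n))) (pb_log N P_dmKP (proj_nonneg (ser_pow L_dmKP n))) =
    ser_diff
      (ser_add
        (ser_diff (ser_shift (dS.ser_D (Bn n)) u1) (ser_smul (dS.D u1) (ser_dk (ser_shift (Bn n) u1))))
        (ser_const (dS.D (cn n))))
      (ser_add
        (ser_add (ser_shift (pb_log N P (Bn n)) u1)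
          (ser_smul (\<lambda>s x t. dX.D (P (int N)) s x t / P (int N) s x t) (ser_dk (ser_shift (Bn n) u1))))
        (ser_smul (dX.D (cn n)) (ser_shift (dk_logP N P) u1)))"
    unfolding proj_nonneg_L_dmKP_pow ser_ds_eq
    by (simp add: dS.ser_D_add dS.ser_D_shift dS.ser_D_const pb_log_add_const
        pb_log_shift[OF deg_P P_lead_nonzero dX_P dX_u1] dk_logP_normalized_shift[OF deg_P P_lead_nonzero]
        del: ser_shift_dk)
  show ?thesis
    unfolding lhs rhs dT_u1_eq_dX_cn[OF n] dS_u1_eq dS_cn_eq[OF n]
    by (rule ser_eqI) (simp_all add: algebra_simps del: ser_fls_dk)
qed

end

theorem mainTheorem12:
  fixes N :: nat and L P :: ser
  assumes "dcmKP N L P"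
  shows "dmKP N (ser_shift L (L 0))
                (\<lambda>m s x t. ser_shift P (L 0) m s x t / P (int N) s x t)"
proof -
  interpret dcmKP_solution N L P by (rule dcmKP_solution.intro[OF assms])
  have P_dmKP_eq: "(\<lambda>m s x t. ser_shift P (L 0) m s x t / P (int N) s x t) = P_dmKP"
    by (intro ext) (simp add: normalized_shift_def ser_smul_def)
  show ?thesis
    unfolding P_dmKP_eq dmKP_def hier_eqs_def
    using L_dmKP_coeff_1 L_dmKP_coeff_0 L_dmKP_coeff_gt_1 P_dmKP_lead P_dmKP_coeff_outside
      cf_diff_L_dmKP cf_diff_P_dmKP L_dmKP_Lax_t L_dmKP_Lax_s P_dmKP_log_t
    by auto
qed

end
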